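(* Let $H,K$ be Hilbert spaces and $T$ a densely defined closed operator from $D(T)\subset H$ into $K$ with closed range. Then $T|T|$ is a closed operator and $R(T|T|)=R(T)$.
   Context: $|T|=(T^{*}T)^{1/2}$; the product $T|T|$ is defined on its natural domain $\{x\in D(|T|):|T|x\in D(T)\}$. *)

theory Defs
  imports "HOL-Analysis.Analysis"
begin

class complex_vector = real_vector +
  fixes scaleC :: "complex \<Rightarrow> 'a \<Rightarrow> 'a"
  assumes scaleC_add_right: "scaleC a (x + y) = scaleC a x + scaleC a y"
    and scaleC_add_left: "scaleC (a + b) x = scaleC a x + scaleC b x"
    and scaleC_scaleC: "scaleC a (scaleC b x) = scaleC (a * b) x"
    and scaleC_one: "scaleC 1 x = x"
    and scaleR_scaleC: "scaleR r x = scaleC (complex_of_real r) x"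

class complex_inner = complex_vector + real_normed_vector +
  fixes cinner :: "'a \<Rightarrow> 'a \<Rightarrow> complex"
  assumes cinner_commute: "cinner x y = cnj (cinner y x)"
    and cinner_add_left: "cinner (x + y) z = cinner x z + cinner y z"
    and cinner_scaleC_left: "cinner (scaleC a x) y = a * cinner x y"
    and cinner_self_real: "cinner x x \<in> \<real>"
    and cinner_self_nonneg: "0 \<le> Re (cinner x x)"
    and cinner_self_zero: "cinner x x = 0 \<longleftrightarrow> x = 0"
    and norm_eq_sqrt_cinner: "norm x = sqrt (Re (cinner x x))"

class chilbert = complex_inner + complete_space

text \<open>An operator from H to K is represented by a pair: its domain D (a subset
of H) and a function T, of which only the values on D matter.\<close>

definition csubspace :: "'a::complex_vector set \<Rightarrow> bool" where
  "csubspace D \<longleftrightarrow> 0 \<in> D \<and> (\<forall>x\<in>D. \<forall>y\<in>D. x + y \<in> D) \<and> (\<forall>c. \<forall>x\<in>D. scaleC c x \<in> D)"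

definition lin_op :: "'a::complex_vector set \<Rightarrow> ('a \<Rightarrow> 'b::complex_vector) \<Rightarrow> bool" where
  "lin_op D T \<longleftrightarrow> csubspace D \<and> (\<forall>x\<in>D. \<forall>y\<in>D. T (x + y) = T x + T y)
      \<and> (\<forall>c. \<forall>x\<in>D. T (scaleC c x) = scaleC c (T x))"

definition densely_defined :: "'a::chilbert set \<Rightarrow> ('a \<Rightarrow> 'b::chilbert) \<Rightarrow> bool" where
  "densely_defined D T \<longleftrightarrow> lin_op D T \<and> closure D = UNIV"

definition graph :: "'a set \<Rightarrow> ('a \<Rightarrow> 'b) \<Rightarrow> ('a \<times> 'b) set" where
  "graph D T = {(x, T x) | x. x \<in> D}"

definition closed_op :: "'a::chilbert set \<Rightarrow> ('a \<Rightarrow> 'b::chilbert) \<Rightarrow> bool" where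
  "closed_op D T \<longleftrightarrow> lin_op D T \<and> closed (graph D T)"

text \<open>Adjoint of a densely defined operator (values outside the domain set to 0).\<close>

definition adj_dom :: "'a::chilbert set \<Rightarrow> ('a \<Rightarrow> 'b::chilbert) \<Rightarrow> 'b set" where
  "adj_dom D T = {y. \<exists>z. \<forall>x\<in>D. cinner (T x) y = cinner x z}"

definition adj :: "'a::chilbert set \<Rightarrow> ('a \<Rightarrow> 'b::chilbert) \<Rightarrow> 'b \<Rightarrow> 'a" where
  "adj D T y = (if y \<in> adj_dom D T then (THE z. \<forall>x\<in>D. cinner (T x) y = cinner x z) else 0)"

definition comp_dom :: "'b set \<Rightarrow> ('b \<Rightarrow> 'c) \<Rightarrow> 'a set \<Rightarrow> ('a \<Rightarrow> 'b) \<Rightarrow> 'a set" where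
  "comp_dom DA A DB B = {x \<in> DB. B x \<in> DA}"

definition self_adjoint :: "'a::chilbert set \<Rightarrow> ('a \<Rightarrow> 'a) \<Rightarrow> bool" where
  "self_adjoint D S \<longleftrightarrow> densely_defined D S \<and> adj_dom D S = D \<and> (\<forall>x\<in>D. adj D S x = S x)"

definition positive_op :: "'a::chilbert set \<Rightarrow> ('a \<Rightarrow> 'a) \<Rightarrow> bool" where
  "positive_op D S \<longleftrightarrow> (\<forall>x\<in>D. cinner (S x) x \<in> \<real> \<and> 0 \<le> Re (cinner (S x) x))"

definition is_sqrt_TsT :: "'a::chilbert set \<Rightarrow> ('a \<Rightarrow> 'b::chilbert) \<Rightarrow> 'a set \<Rightarrow> ('a \<Rightarrow> 'a) \<Rightarrow> bool" where
  "is_sqrt_TsT D T DS S \<longleftrightarrow>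
     self_adjoint DS S \<and> positive_op DS S \<and> (\<forall>x. x \<notin> DS \<longrightarrow> S x = 0) \<and>
     comp_dom DS S DS S = comp_dom (adj_dom D T) (adj D T) D T \<and>
     (\<forall>x \<in> comp_dom DS S DS S. S (S x) = adj D T (T x))"

definition abs_op_pair :: "'a::chilbert set \<Rightarrow> ('a \<Rightarrow> 'b::chilbert) \<Rightarrow> 'a set \<times> ('a \<Rightarrow> 'a)" where
  "abs_op_pair D T = (THE p. is_sqrt_TsT D T (fst p) (snd p))"

definition abs_dom :: "'a::chilbert set \<Rightarrow> ('a \<Rightarrow> 'b::chilbert) \<Rightarrow> 'a set" where
  "abs_dom D T = fst (abs_op_pair D T)"

definition abs_op :: "'a::chilbert set \<Rightarrow> ('a \<Rightarrow> 'b::chilbert) \<Rightarrow> 'a \<Rightarrow> 'a" where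
  "abs_op D T = snd (abs_op_pair D T)"

end

theory Submission
  imports Defs "HOL-Computational_Algebra.Formal_Power_Series"
begin

text \<open>
  Let \<open>A = (I + T\<^sup>*T)\<^sup>-\<^sup>1\<close>. By von Neumann's theorem \<open>A\<close> is a positive contraction whose
  range is the domain of \<open>T\<^sup>*T\<close>. The square roots \<open>B = A\<^sup>1\<^sup>/\<^sup>2\<close> and \<open>C = (I - A)\<^sup>1\<^sup>/\<^sup>2\<close>,
  given by the binomial series, commute, and \<open>C B\<^sup>-\<^sup>1\<close> is a positive self-adjoint square
  root of \<open>T\<^sup>*T\<close>. Any such root \<open>S\<close> satisfies \<open>S A = C B\<close> and has \<open>A(H)\<close> as a core;
  hence \<open>|T|\<close> is unique, \<open>D(|T|) = D(T)\<close> and \<open>\<parallel>|T| x\<parallel> = \<parallel>T x\<parallel>\<close>, so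
  \<open>ker |T| = ker T\<close>.

  Since \<open>R(T)\<close> is closed, the open mapping theorem bounds \<open>T\<close> from below on
  \<open>D(T) \<inter> (ker T)\<^sup>\<bottom>\<close>, and therefore also \<open>|T|\<close>; so \<open>R(|T|)\<close> is closed and, \<open>|T|\<close> being
  self-adjoint, equals \<open>(ker T)\<^sup>\<bottom>\<close>. If \<open>x\<^sub>n \<rightarrow> x\<close> and \<open>T |T| x\<^sub>n \<rightarrow> y\<close>, the lower bound makes
  \<open>|T| x\<^sub>n\<close> Cauchy, and closedness of \<open>|T|\<close> and \<open>T\<close> gives \<open>T |T| x = y\<close>. Finally
  \<open>T |T|\<close> maps onto \<open>T(D(T) \<inter> (ker T)\<^sup>\<bottom>) = R(T)\<close>.
\<close>

section \<open>Complex inner product spaces\<close>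

lemma scaleC_zero_left [simp]: "scaleC 0 (x::'a::complex_vector) = 0"
proof -
  have "scaleC 0 x = scaleC 0 x + scaleC 0 x"
    using scaleC_add_left[of 0 0 x] by simp
  then show ?thesis by simp
qed

lemma scaleC_zero_right [simp]: "scaleC a (0::'a::complex_vector) = 0"
proof -
  have "scaleC a (0::'a) = scaleC a 0 + scaleC a 0"
    using scaleC_add_right[of a 0 0] by simp
  then show ?thesis by simp
qed

lemma scaleC_minus_left: "scaleC (- a) x = - scaleC a (x::'a::complex_vector)"
proof -
  have "scaleC (- a) x + scaleC a x = 0"
    using scaleC_add_left[of "-a" a x] by simp
  then show ?thesis by (simp add: eq_neg_iff_add_eq_0)
qed

lemma scaleC_diff_right: "scaleC a (x - y) = scaleC a x - scaleC a (y::'a::complex_vector)"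
proof -
  have "scaleC a (x - y) + scaleC a y = scaleC a x"
    using scaleC_add_right[of a "x - y" y] by simp
  then show ?thesis by (simp add: eq_diff_eq)
qed

lemma cinner_zero_left [simp]: "cinner 0 y = 0"
proof -
  have "cinner (0::'a) y = cinner 0 y + cinner 0 y"
    using cinner_add_left[of 0 0 y] by simp
  then show ?thesis by simp
qed

lemma cinner_zero_right [simp]: "cinner x 0 = 0"
  by (metis cinner_commute cinner_zero_left complex_cnj_zero)

lemma cinner_add_right: "cinner x (y + z) = cinner x y + cinner x z"
  by (metis cinner_add_left cinner_commute complex_cnj_add)

lemma cinner_scaleC_right: "cinner x (scaleC a y) = cnj a * cinner x y"
  by (metis cinner_commute cinner_scaleC_left complex_cnj_cnj complex_cnj_mult)

lemma cinner_minus_left: "cinner (- x) y = - cinner x y"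
  using cinner_scaleC_left[of "-1" x y] scaleC_minus_left[of 1 x] by (simp add: scaleC_one)

lemma cinner_diff_left: "cinner (x - y) z = cinner x z - cinner y z"
  using cinner_add_left[of x "-y" z] by (simp add: cinner_minus_left)

lemma cinner_diff_right: "cinner x (y - z) = cinner x y - cinner x z"
  by (metis cinner_commute cinner_diff_left complex_cnj_diff)

lemma cinner_scaleR_left: "cinner (scaleR r x) y = of_real r * cinner x y"
  by (simp add: scaleR_scaleC cinner_scaleC_left)

lemma cinner_scaleR_right: "cinner x (scaleR r y) = of_real r * cinner x y"
  by (simp add: scaleR_scaleC cinner_scaleC_right)

lemma power2_norm_eq_cinner: "(norm x)^2 = Re (cinner x x)"
  using norm_eq_sqrt_cinner[of x] cinner_self_nonneg[of x] by simp

lemma cinner_self_eq: "cinner x x = complex_of_real ((norm x)^2)"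
  using cinner_self_real[of x] by (simp add: complex_eq_iff power2_norm_eq_cinner complex_is_Real_iff)

lemma Re_cinner_commute: "Re (cinner x y) = Re (cinner y x)"
  by (subst cinner_commute) simp

lemma power2_norm_diff:
  "(norm (x - y))^2 = (norm x)^2 + (norm y)^2 - 2 * Re (cinner x y)"
proof -
  have "(norm (x - y))^2 = Re (cinner x x - cinner x y - cinner y x + cinner y y)"
    by (simp add: power2_norm_eq_cinner cinner_diff_left cinner_diff_right)
  then show ?thesis
    by (simp add: power2_norm_eq_cinner Re_cinner_commute[of y x])
qed

lemma power2_norm_add:
  "(norm (x + y))^2 = (norm x)^2 + (norm y)^2 + 2 * Re (cinner x y)"
proof -
  have "(norm (x + y))^2 = Re (cinner x x + cinner x y + cinner y x + cinner y y)"
    by (simp add: power2_norm_eq_cinner cinner_add_left cinner_add_right)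
  then show ?thesis
    by (simp add: power2_norm_eq_cinner Re_cinner_commute[of y x])
qed

lemma parallelogram_law:
  "(norm (x + y))^2 + (norm (x - y))^2 = 2 * (norm x)^2 + 2 * (norm (y::'a::complex_inner))^2"
  by (simp add: power2_norm_add power2_norm_diff)

lemma cinner_Cauchy_Schwarz: "cmod (cinner x y) \<le> norm x * norm y"
proof (cases "y = 0")
  case True then show ?thesis by simp
next
  case False
  define t where "t = cinner x y / cinner y y"
  define z where "z = x - scaleC t y"
  have yy: "cinner y y \<noteq> 0" using False cinner_self_zero by blast
  have zy: "cinner z y = 0"
    using yy by (simp add: z_def cinner_diff_left cinner_scaleC_left t_def)
  have "cinner z z = cinner z x"
    by (simp add: z_def cinner_diff_right cinner_scaleC_right zy[unfolded z_def])
  also have "\<dots> = cinner x x - t * cinner y x"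
    by (simp add: z_def cinner_diff_left cinner_scaleC_left)
  finally have zz: "cinner z z = cinner x x - t * cinner y x" .
  have ny: "(norm y)^2 > 0" using False by simp
  have "t * cinner y x = complex_of_real ((cmod (cinner x y))^2 / (norm y)^2)"
    unfolding t_def cinner_self_eq
    by (subst cinner_commute[of y x]) (simp add: complex_mult_cnj cmod_power2 field_simps flip: of_real_mult)
  with zz have "Re (cinner z z) = (norm x)^2 - (cmod (cinner x y))^2 / (norm y)^2"
    by (simp add: power2_norm_eq_cinner)
  with cinner_self_nonneg[of z] have "(cmod (cinner x y))^2 / (norm y)^2 \<le> (norm x)^2" by simp
  then have "(cmod (cinner x y))^2 \<le> (norm x * norm y)^2"
    using ny by (simp add: field_simps power_mult_distrib)
  then show ?thesis
    by (meson norm_ge_zero mult_nonneg_nonneg power2_le_imp_le)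
qed

lemma Re_cinner_le: "Re (cinner x y) \<le> norm x * norm y"
  using complex_Re_le_cmod cinner_Cauchy_Schwarz order_trans by blast

lemma bounded_bilinear_cinner: "bounded_bilinear (cinner :: 'a::complex_inner \<Rightarrow> 'a \<Rightarrow> complex)"
proof (rule bounded_bilinear.intro)
  show "\<exists>K. \<forall>a b::'a. norm (cinner a b) \<le> norm a * norm b * K"
    by (rule exI[of _ 1]) (simp add: cinner_Cauchy_Schwarz)
qed (auto simp: cinner_add_left cinner_add_right cinner_scaleR_left cinner_scaleR_right scaleR_conv_of_real)

lemmas tendsto_cinner [tendsto_intros] = bounded_bilinear.tendsto[OF bounded_bilinear_cinner]
lemmas continuous_on_cinner [continuous_intros] = bounded_bilinear.continuous_on[OF bounded_bilinear_cinner]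
lemmas bounded_linear_cinner_left = bounded_bilinear.bounded_linear_left[OF bounded_bilinear_cinner]
lemmas bounded_linear_cinner_right = bounded_bilinear.bounded_linear_right[OF bounded_bilinear_cinner]

lemma norm_scaleC: "norm (scaleC a (x::'a::complex_inner)) = cmod a * norm x"
proof -
  have "(norm (scaleC a x))^2 = Re (a * cnj a * cinner x x)"
    by (simp add: power2_norm_eq_cinner cinner_scaleC_left cinner_scaleC_right algebra_simps)
  also have "\<dots> = (cmod a)^2 * (norm x)^2"
    by (simp add: complex_mult_cnj cinner_self_eq cmod_power2 flip: of_real_mult)
  finally show ?thesis
    by (metis norm_ge_zero power_mult_distrib real_sqrt_abs abs_of_nonneg
        mult_nonneg_nonneg real_sqrt_unique)
qed

lemma bounded_linear_scaleC: "bounded_linear (scaleC c :: 'a::complex_inner \<Rightarrow> 'a)"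
  by (rule bounded_linear_intro[of _ "cmod c"])
     (auto simp: scaleC_add_right scaleR_scaleC scaleC_scaleC mult.commute norm_scaleC)

lemma cinner_all_zero_imp_zero: "(\<And>y. cinner x y = 0) \<Longrightarrow> x = 0"
  using cinner_self_zero by blast

declare cinner_self_zero [simp]

instance chilbert \<subseteq> banach ..

section \<open>Subspaces and orthogonal projection\<close>

lemma csubspace_0: "csubspace D \<Longrightarrow> 0 \<in> D"
  by (simp add: csubspace_def)

lemma csubspace_add: "csubspace D \<Longrightarrow> x \<in> D \<Longrightarrow> y \<in> D \<Longrightarrow> x + y \<in> D"
  by (simp add: csubspace_def)

lemma csubspace_scaleC: "csubspace D \<Longrightarrow> x \<in> D \<Longrightarrow> scaleC c x \<in> D"
  by (simp add: csubspace_def)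

lemma csubspace_scaleR: "csubspace D \<Longrightarrow> x \<in> D \<Longrightarrow> scaleR r x \<in> D"
  by (simp add: csubspace_scaleC scaleR_scaleC)

lemma csubspace_diff: "csubspace D \<Longrightarrow> x \<in> D \<Longrightarrow> y \<in> D \<Longrightarrow> x - y \<in> D"
  using csubspace_add[of D x "- y"] csubspace_scaleC[of D y "- 1"]
  by (simp add: scaleC_minus_left scaleC_one)

lemma csubspace_sum: "csubspace D \<Longrightarrow> (\<And>i. i \<in> A \<Longrightarrow> f i \<in> D) \<Longrightarrow> sum f A \<in> D"
  by (induction A rule: infinite_finite_induct) (auto simp: csubspace_0 csubspace_add)

lemma csubspace_closure:
  fixes M :: "'a::complex_inner set"
  assumes "csubspace M"
  shows "csubspace (closure M)"
  unfolding csubspace_def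
proof (intro conjI ballI allI)
  show "0 \<in> closure M" using assms csubspace_0 closure_subset by blast
next
  fix x y assume "x \<in> closure M" "y \<in> closure M"
  then obtain a b where a: "\<forall>n. a n \<in> M" "a \<longlonglongrightarrow> x" and b: "\<forall>n. b n \<in> M" "b \<longlonglongrightarrow> y"
    by (auto simp: closure_sequential)
  have "\<forall>n. a n + b n \<in> M" using a b assms csubspace_add by blast
  moreover have "(\<lambda>n. a n + b n) \<longlonglongrightarrow> x + y" using a b by (intro tendsto_intros)
  ultimately show "x + y \<in> closure M" by (auto simp: closure_sequential)
next
  fix c x assume "x \<in> closure M"
  then obtain a where a: "\<forall>n. a n \<in> M" "a \<longlonglongrightarrow> x"
    by (auto simp: closure_sequential)
  have "\<forall>n. scaleC c (a n) \<in> M" using a assms csubspace_scaleC by blast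
  moreover have "(\<lambda>n. scaleC c (a n)) \<longlonglongrightarrow> scaleC c x"
    using a bounded_linear.tendsto[OF bounded_linear_scaleC] by blast
  ultimately show "scaleC c x \<in> closure M" by (auto simp: closure_sequential)
qed

definition orthogonal_complement :: "'a::complex_inner set \<Rightarrow> 'a set" where
  "orthogonal_complement M = {x. \<forall>m\<in>M. cinner x m = 0}"

lemma orthogonal_complementI: "(\<And>m. m \<in> M \<Longrightarrow> cinner x m = 0) \<Longrightarrow> x \<in> orthogonal_complement M"
  by (simp add: orthogonal_complement_def)

lemma orthogonal_complementD: "x \<in> orthogonal_complement M \<Longrightarrow> m \<in> M \<Longrightarrow> cinner x m = 0"
  by (simp add: orthogonal_complement_def)

lemma csubspace_orthogonal_complement: "csubspace (orthogonal_complement M)"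
  by (auto simp: csubspace_def orthogonal_complement_def cinner_add_left cinner_scaleC_left)

lemma closed_orthogonal_complement: "closed (orthogonal_complement M)"
proof -
  have "orthogonal_complement M = (\<Inter>m\<in>M. {x. cinner x m = 0})"
    by (auto simp: orthogonal_complement_def)
  moreover have "closed {x. cinner x m = 0}" for m
    by (intro closed_Collect_eq continuous_intros)
  ultimately show ?thesis by auto
qed

lemma orthogonal_complement_Int: "x \<in> M \<Longrightarrow> x \<in> orthogonal_complement M \<Longrightarrow> x = 0"
  using orthogonal_complementD cinner_self_zero by blast

lemma real_eq_0_if_linear_le_quadratic:
  fixes a b :: real
  assumes "b \<ge> 0" and le: "\<And>t. 2 * t * a \<le> t^2 * b"
  shows "a = 0"
proof -
  define t where "t = a / (b + 1)"
  have ta: "t * (b + 1) = a" using \<open>b \<ge> 0\<close> by (simp add: t_def)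
  have "2 * t * a * (b + 1)^2 \<le> t^2 * b * (b + 1)^2"
    using le[of t] by (intro mult_right_mono) auto
  moreover have "2 * t * a * (b + 1)^2 = 2 * a * (t * (b + 1)) * (b + 1)"
    "t^2 * b * (b + 1)^2 = (t * (b + 1)) * (t * (b + 1)) * b"
    by (simp_all add: power2_eq_square algebra_simps)
  ultimately have "2 * a * a * (b + 1) \<le> a * a * b" unfolding ta by simp
  then have "(a * a) * (b + 2) \<le> 0" by (simp add: algebra_simps)
  with \<open>b \<ge> 0\<close> have "a * a \<le> 0" by (simp add: mult_le_0_iff)
  then have "a * a = 0" using zero_le_square[of a] by linarith
  then show ?thesis by simp
qed

lemma power2_norm_diff_le_midpoint:
  fixes x a b :: "'a::complex_inner"
  assumes "d \<le> norm (x - scaleR (1/2) (a + b))" "0 \<le> d"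
    and "norm (x - a) \<le> d + e" "norm (x - b) \<le> d + e" "0 \<le> e"
  shows "(norm (a - b))^2 \<le> 4 * e * (2 * d + e)"
proof -
  have "x - scaleR (1/2) (a + b) = scaleR (1/2) ((x - a) + (x - b))"
    by (simp add: algebra_simps flip: scaleR_add_left)
  then have "2 * d \<le> norm ((x - a) + (x - b))" using assms(1) by simp
  then have "(2 * d)^2 \<le> (norm ((x - a) + (x - b)))^2"
    using assms(2) by (intro power_mono) auto
  then have "4 * d^2 \<le> (norm ((x - a) + (x - b)))^2"
    by (simp add: power_mult_distrib)
  moreover have "(norm (x - a))^2 \<le> (d + e)^2" "(norm (x - b))^2 \<le> (d + e)^2"
    using assms by (auto intro: power_mono)
  moreover have "(norm (a - b))^2 = 2 * (norm (x - a))^2 + 2 * (norm (x - b))^2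
      - (norm ((x - a) + (x - b)))^2"
    using parallelogram_law[of "x - a" "x - b"] by (simp add: norm_minus_commute)
  ultimately show ?thesis by (simp add: power2_eq_square algebra_simps)
qed

text \<open>A minimizing sequence for the distance from \<open>x\<close> to a subspace is Cauchy: by the
  parallelogram law, midpoints are no closer to \<open>x\<close> than the infimum \<open>d\<close>.\<close>

lemma Cauchy_minimizing_sequence:
  fixes M :: "'a::complex_inner set"
  assumes sub: "csubspace M" and mM: "\<And>n. m n \<in> M" and d0: "0 \<le> d"
    and dle: "\<And>q. q \<in> M \<Longrightarrow> d \<le> norm (x - q)"
    and mlt: "\<And>n. norm (x - m n) < d + 1 / (real n + 1)"
  shows "Cauchy m"
proof (rule metric_CauchyI)
  have mid: "d \<le> norm (x - scaleR (1/2) (m i + m j))" for i j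
    using sub mM by (intro dle csubspace_scaleR csubspace_add)
  have bound: "(norm (m i - m j))^2 \<le> (8 * d + 4) / (real N + 1)" if "i \<ge> N" "j \<ge> N" for i j N
  proof -
    define e where "e = 1 / (real N + 1)"
    have "1 / (real i + 1) \<le> e" "1 / (real j + 1) \<le> e"
      using that by (auto simp: e_def field_simps)
    then have "norm (x - m i) \<le> d + e" "norm (x - m j) \<le> d + e"
      using mlt[of i] mlt[of j] by linarith+
    moreover have "0 \<le> e" by (simp add: e_def)
    ultimately have "(norm (m i - m j))^2 \<le> 4 * e * (2 * d + e)"
      by (rule power2_norm_diff_le_midpoint[OF mid d0])
    also have "\<dots> \<le> 4 * e * (2 * d + 1)"
      by (intro mult_left_mono) (auto simp: e_def)
    finally show ?thesis by (simp add: e_def field_simps)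
  qed
  fix eps :: real assume "eps > 0"
  obtain N :: nat where "(8 * d + 4) / eps^2 < real N"
    using reals_Archimedean2 by blast
  then have "(8 * d + 4) / eps^2 < real N + 1" by simp
  then have lt: "(8 * d + 4) / (real N + 1) < eps^2"
    using \<open>eps > 0\<close> d0 by (simp add: field_simps)
  have "dist (m i) (m j) < eps" if "i \<ge> N" "j \<ge> N" for i j
    using bound[OF that] lt \<open>eps > 0\<close> by (simp add: dist_norm power2_less_imp_less)
  then show "\<exists>M. \<forall>m'\<ge>M. \<forall>n\<ge>M. dist (m m') (m n) < eps" by blast
qed

lemma closed_csubspace_nearest_point:
  fixes M :: "'a::chilbert set"
  assumes sub: "csubspace M" and cl: "closed M"
  shows "\<exists>p\<in>M. \<forall>q\<in>M. norm (x - p) \<le> norm (x - q)"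
proof -
  define d where "d = infdist x M"
  have d0: "d \<ge> 0" by (simp add: d_def infdist_nonneg)
  have dle: "d \<le> norm (x - m)" if "m \<in> M" for m
    using infdist_le[OF that, of x] by (simp add: d_def dist_norm)
  have "\<exists>m\<in>M. norm (x - m) < d + 1 / (real n + 1)" for n
  proof -
    have ne: "M \<noteq> {}" using sub csubspace_0 by blast
    have "infdist x M < d + 1 / (real n + 1)" by (simp add: d_def)
    then have "(INF a\<in>M. dist x a) < d + 1 / (real n + 1)" using infdist_notempty[OF ne] by simp
    moreover have bdd: "bdd_below ((\<lambda>a. dist x a) ` M)" by (rule bdd_belowI[of _ 0]) auto
    ultimately have "\<exists>m\<in>M. dist x m < d + 1 / (real n + 1)"
      unfolding cINF_less_iff[OF ne bdd] by blast
    then show ?thesis by (auto simp: dist_norm)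
  qed
  then obtain m where mM: "\<And>n. m n \<in> M" and mlt: "\<And>n. norm (x - m n) < d + 1 / (real n + 1)"
    by metis
  obtain p where p: "m \<longlonglongrightarrow> p"
    using Cauchy_minimizing_sequence[OF sub mM d0 dle mlt] convergent_eq_Cauchy by blast
  have le_d: "norm (x - p) \<le> d"
  proof (rule tendsto_le[OF trivial_limit_sequentially])
    show "(\<lambda>n. norm (x - m n)) \<longlonglongrightarrow> norm (x - p)" using p by (intro tendsto_intros)
    show "(\<lambda>n. d + 1 / (real n + 1)) \<longlonglongrightarrow> d"
      using LIMSEQ_inverse_real_of_nat_add[of d] by (simp add: inverse_eq_divide add.commute)
    show "\<forall>\<^sub>F n in sequentially. norm (x - m n) \<le> d + 1 / (real n + 1)"
      using mlt less_imp_le by (auto intro!: always_eventually)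
  qed
  have "p \<in> M" using cl mM p closed_sequential_limits by blast
  moreover have "norm (x - p) \<le> norm (x - q)" if "q \<in> M" for q
    using le_d dle[OF that] by linarith
  ultimately show ?thesis by blast
qed

lemma nearest_point_orthogonal:
  fixes M :: "'a::complex_inner set"
  assumes sub: "csubspace M" and p: "p \<in> M" and min: "\<And>q. q \<in> M \<Longrightarrow> norm (x - p) \<le> norm (x - q)"
    and m: "m \<in> M"
  shows "cinner (x - p) m = 0"
proof -
  have Re0: "Re (cinner (x - p) q) = 0" if "q \<in> M" for q
  proof (rule real_eq_0_if_linear_le_quadratic)
    fix t :: real
    have "p + scaleR t q \<in> M" using sub p that csubspace_add csubspace_scaleR by blast
    then have "norm (x - p) \<le> norm ((x - p) - scaleR t q)"
      using min by (simp add: algebra_simps)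
    then have "(norm (x - p))^2 \<le> (norm ((x - p) - scaleR t q))^2"
      by (simp add: power_mono)
    also have "\<dots> = (norm (x - p))^2 + t^2 * (norm q)^2 - 2 * t * Re (cinner (x - p) q)"
      by (simp add: power2_norm_diff cinner_scaleR_right power_mult_distrib)
    finally show "2 * t * Re (cinner (x - p) q) \<le> t^2 * (norm q)^2" by simp
  qed simp
  have "scaleC \<i> m \<in> M" using sub m csubspace_scaleC by blast
  from Re0[OF this] have "Im (cinner (x - p) m) = 0" by (simp add: cinner_scaleC_right)
  with Re0[OF m] show ?thesis by (simp add: complex_eq_iff)
qed

lemma orthogonal_projection_exists:
  fixes M :: "'a::chilbert set"
  assumes "csubspace M" and "closed M"
  shows "\<exists>p\<in>M. x - p \<in> orthogonal_complement M"
proof -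
  obtain p where p: "p \<in> M" and min: "\<And>q. q \<in> M \<Longrightarrow> norm (x - p) \<le> norm (x - q)"
    using closed_csubspace_nearest_point[OF assms] by blast
  have "x - p \<in> orthogonal_complement M"
    by (rule orthogonal_complementI) (rule nearest_point_orthogonal[OF assms(1) p min])
  with p show ?thesis by blast
qed

lemma dense_if_orthogonal_complement_trivial:
  fixes M :: "'a::chilbert set"
  assumes sub: "csubspace M" and orth: "orthogonal_complement M \<subseteq> {0}"
  shows "closure M = UNIV"
proof -
  have "x \<in> closure M" for x
  proof -
    obtain p where p: "p \<in> closure M" "x - p \<in> orthogonal_complement (closure M)"
      using orthogonal_projection_exists[OF csubspace_closure[OF sub] closed_closure] by blast
    then have "x - p \<in> orthogonal_complement M"
      using closure_subset by (auto simp: orthogonal_complement_def)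
    then have "x = p" using orth by auto
    then show ?thesis using p(1) by simp
  qed
  then show ?thesis by auto
qed

lemma orthogonal_complement_dense_zero:
  fixes D :: "'a::complex_inner set"
  assumes "closure D = UNIV" "w \<in> orthogonal_complement D"
  shows "w = 0"
proof -
  have "closed {x. cinner x w = 0}"
    by (intro closed_Collect_eq continuous_intros)
  moreover have "D \<subseteq> {x. cinner x w = 0}"
    using assms(2) by (auto simp: orthogonal_complement_def cinner_commute[of _ w])
  ultimately have "closure D \<subseteq> {x. cinner x w = 0}" by (rule closure_minimal[rotated])
  then have "cinner w w = 0" using assms(1) by blast
  then show ?thesis by simp
qed

section \<open>The product of two Hilbert spaces\<close>

instantiation prod :: (complex_vector, complex_vector) complex_vector
begin
definition scaleC_prod_def: "scaleC c x = (scaleC c (fst x), scaleC c (snd x))"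
instance
  by standard (auto simp: scaleC_prod_def scaleC_add_right scaleC_add_left scaleC_scaleC
      scaleC_one scaleR_prod_def scaleR_scaleC)
end

instantiation prod :: (complex_inner, complex_inner) complex_inner
begin
definition cinner_prod_def: "cinner x y = cinner (fst x) (fst y) + cinner (snd x) (snd y)"
instance
proof
  fix x y z :: "'a \<times> 'b" and a :: complex
  show "cinner x y = cnj (cinner y x)"
    by (simp add: cinner_prod_def cinner_commute[of "fst x"] cinner_commute[of "snd x"])
  show "cinner (x + y) z = cinner x z + cinner y z"
    by (simp add: cinner_prod_def cinner_add_left)
  show "cinner (scaleC a x) y = a * cinner x y"
    by (simp add: cinner_prod_def scaleC_prod_def cinner_scaleC_left distrib_left)
  have e: "cinner x x = complex_of_real ((norm (fst x))^2 + (norm (snd x))^2)"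
    by (simp add: cinner_prod_def cinner_self_eq)
  show "cinner x x \<in> \<real>" by (simp add: e)
  show "0 \<le> Re (cinner x x)" by (simp add: e)
  have "cinner x x = 0 \<longleftrightarrow> (norm (fst x))^2 + (norm (snd x))^2 = 0"
    unfolding e of_real_eq_0_iff ..
  also have "\<dots> \<longleftrightarrow> x = 0" by (simp add: add_nonneg_eq_0_iff prod_eq_iff)
  finally show "(cinner x x = 0) = (x = 0)" .
  show "norm x = sqrt (Re (cinner x x))"
    by (simp add: e norm_prod_def)
qed
end

instance prod :: (chilbert, chilbert) chilbert ..

lemma cinner_Pair: "cinner (a, b) (c, d) = cinner a c + cinner b d"
  by (simp add: cinner_prod_def)

section \<open>Linear operators, graphs and adjoints\<close>

lemma lin_op_csubspace: "lin_op D T \<Longrightarrow> csubspace D"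
  by (simp add: lin_op_def)

lemma lin_op_add: "lin_op D T \<Longrightarrow> x \<in> D \<Longrightarrow> y \<in> D \<Longrightarrow> T (x + y) = T x + T y"
  by (simp add: lin_op_def)

lemma lin_op_scaleC: "lin_op D T \<Longrightarrow> x \<in> D \<Longrightarrow> T (scaleC c x) = scaleC c (T x)"
  by (simp add: lin_op_def)

lemma lin_op_scaleR: "lin_op D T \<Longrightarrow> x \<in> D \<Longrightarrow> T (scaleR r x) = scaleR r (T x)"
  by (simp add: lin_op_scaleC scaleR_scaleC)

lemma lin_op_0: "lin_op D T \<Longrightarrow> T 0 = 0"
  using lin_op_scaleC[of D T 0 0] csubspace_0[OF lin_op_csubspace] by fastforce

lemma lin_op_diff: "lin_op D T \<Longrightarrow> x \<in> D \<Longrightarrow> y \<in> D \<Longrightarrow> T (x - y) = T x - T y"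
  using lin_op_add[of D T "x - y" y] csubspace_diff[OF lin_op_csubspace, of D T x y]
  by (simp add: eq_diff_eq)

lemma lin_op_sum:
  assumes "lin_op D T" "\<And>i. i \<in> A \<Longrightarrow> f i \<in> D"
  shows "T (sum f A) = (\<Sum>i\<in>A. T (f i))"
  using assms(2)
proof (induction A rule: infinite_finite_induct)
  case (insert x F)
  then show ?case
    using lin_op_add[OF assms(1), of "f x" "sum f F"] csubspace_sum[OF lin_op_csubspace[OF assms(1)], of F f]
    by simp
qed (simp_all add: lin_op_0[OF assms(1)])

lemma csubspace_image:
  assumes "lin_op D T"
  shows "csubspace (T ` D)"
proof -
  have D: "csubspace D" using assms by (rule lin_op_csubspace)
  have "0 \<in> T ` D" using csubspace_0[OF D] lin_op_0[OF assms] by force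
  moreover have "T x + T y \<in> T ` D" if "x \<in> D" "y \<in> D" for x y
    using that lin_op_add[OF assms] csubspace_add[OF D] by (metis image_eqI)
  moreover have "scaleC c (T x) \<in> T ` D" if "x \<in> D" for x c
    using that lin_op_scaleC[OF assms] csubspace_scaleC[OF D] by (metis image_eqI)
  ultimately show ?thesis by (auto simp: csubspace_def)
qed

lemma lin_op_comp:
  assumes A: "lin_op DA A" and B: "lin_op DB B"
  shows "lin_op (comp_dom DA A DB B) (A \<circ> B)"
proof -
  have SA: "csubspace DA" and SB: "csubspace DB"
    using A B by (simp_all add: lin_op_csubspace)
  have "0 \<in> comp_dom DA A DB B"
    using csubspace_0[OF SA] csubspace_0[OF SB] lin_op_0[OF B] by (simp add: comp_dom_def)
  moreover have "x + y \<in> comp_dom DA A DB B \<and> A (B (x + y)) = A (B x) + A (B y)"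
    if "x \<in> comp_dom DA A DB B" "y \<in> comp_dom DA A DB B" for x y
  proof -
    have "x \<in> DB" "y \<in> DB" "B x \<in> DA" "B y \<in> DA" using that by (auto simp: comp_dom_def)
    then show ?thesis
      using lin_op_add[OF B] lin_op_add[OF A] csubspace_add[OF SA] csubspace_add[OF SB]
      by (simp add: comp_dom_def)
  qed
  moreover have "scaleC c x \<in> comp_dom DA A DB B \<and> A (B (scaleC c x)) = scaleC c (A (B x))"
    if "x \<in> comp_dom DA A DB B" for x c
  proof -
    have "x \<in> DB" "B x \<in> DA" using that by (auto simp: comp_dom_def)
    then show ?thesis
      using lin_op_scaleC[OF B] lin_op_scaleC[OF A] csubspace_scaleC[OF SA] csubspace_scaleC[OF SB]
      by (simp add: comp_dom_def)
  qed
  ultimately show ?thesis by (simp add: lin_op_def csubspace_def)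
qed

lemma graph_csubspace:
  assumes "lin_op D T"
  shows "csubspace (graph D T)"
proof -
  have "graph D T = (\<lambda>x. (x, T x)) ` D" by (auto simp: graph_def)
  moreover have "lin_op D (\<lambda>x. (x, T x))"
    using assms by (simp add: lin_op_def scaleC_prod_def)
  ultimately show ?thesis by (simp add: csubspace_image)
qed

lemma closed_graph_limit:
  fixes D :: "'a::chilbert set" and T :: "'a \<Rightarrow> 'b::chilbert"
  assumes "closed (graph D T)" "\<And>n. x n \<in> D" "x \<longlonglongrightarrow> a" "(\<lambda>n. T (x n)) \<longlonglongrightarrow> b"
  shows "a \<in> D" "T a = b"
proof -
  have "(\<lambda>n. (x n, T (x n))) \<longlonglongrightarrow> (a, b)" using assms by (intro tendsto_Pair)
  moreover have "\<forall>n. (x n, T (x n)) \<in> graph D T" using assms by (auto simp: graph_def)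
  ultimately have "(a, b) \<in> graph D T"
    using closed_sequential_limits[THEN iffD1, OF assms(1), rule_format, of "\<lambda>n. (x n, T (x n))"]
    by blast
  then show "a \<in> D" "T a = b" by (auto simp: graph_def)
qed

definition op_kernel :: "'a set \<Rightarrow> ('a \<Rightarrow> 'b::zero) \<Rightarrow> 'a set" where
  "op_kernel D T = {x \<in> D. T x = 0}"

lemma csubspace_op_kernel:
  assumes "lin_op D T"
  shows "csubspace (op_kernel D T)"
  using lin_op_csubspace[OF assms] lin_op_add[OF assms] lin_op_scaleC[OF assms] lin_op_0[OF assms]
  by (auto simp: op_kernel_def csubspace_def)

lemma closed_op_kernel:
  fixes D :: "'a::chilbert set" and T :: "'a \<Rightarrow> 'b::chilbert"
  assumes "closed (graph D T)"
  shows "closed (op_kernel D T)"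
  unfolding closed_sequential_limits
proof (intro allI impI)
  fix s l assume h: "(\<forall>k. s k \<in> op_kernel D T) \<and> s \<longlonglongrightarrow> l"
  then have "(\<lambda>k. T (s k)) \<longlonglongrightarrow> 0" by (simp add: op_kernel_def)
  with closed_graph_limit[OF assms, of s l 0] h show "l \<in> op_kernel D T"
    by (auto simp: op_kernel_def)
qed

lemma adj_unique:
  fixes D :: "'a::complex_inner set"
  assumes "closure D = UNIV" "\<And>x. x \<in> D \<Longrightarrow> cinner x z1 = cinner x z2"
  shows "z1 = z2"
proof -
  have "z1 - z2 \<in> orthogonal_complement D"
    using assms(2) by (intro orthogonal_complementI)
      (metis cinner_commute cinner_diff_right complex_cnj_zero diff_self)
  then have "z1 - z2 = 0" by (rule orthogonal_complement_dense_zero[OF assms(1)])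
  then show ?thesis by simp
qed

lemma adj_cinner:
  fixes D :: "'a::chilbert set" and T :: "'a \<Rightarrow> 'b::chilbert"
  assumes "closure D = UNIV" "y \<in> adj_dom D T" "x \<in> D"
  shows "cinner (T x) y = cinner x (adj D T y)"
proof -
  obtain z0 where z0: "\<forall>x\<in>D. cinner (T x) y = cinner x z0"
    using assms(2) unfolding adj_dom_def by blast
  then have "\<exists>!z. \<forall>x\<in>D. cinner (T x) y = cinner x z"
    using adj_unique[OF assms(1)] by (metis (no_types, lifting))
  then have "\<forall>x\<in>D. cinner (T x) y = cinner x (THE z. \<forall>x\<in>D. cinner (T x) y = cinner x z)"
    by (rule theI')
  then show ?thesis using assms by (simp add: adj_def)
qed

lemma adj_eqI:
  fixes D :: "'a::chilbert set" and T :: "'a \<Rightarrow> 'b::chilbert"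
  assumes "closure D = UNIV" "\<And>x. x \<in> D \<Longrightarrow> cinner (T x) y = cinner x z"
  shows "y \<in> adj_dom D T" "adj D T y = z"
proof -
  show y: "y \<in> adj_dom D T" using assms by (auto simp: adj_dom_def)
  show "adj D T y = z"
    using adj_unique[OF assms(1)] adj_cinner[OF assms(1) y] assms(2) by metis
qed

lemma lin_op_adj:
  fixes D :: "'a::chilbert set" and T :: "'a \<Rightarrow> 'b::chilbert"
  assumes dense: "closure D = UNIV"
  shows "lin_op (adj_dom D T) (adj D T)"
proof -
  have "y1 + y2 \<in> adj_dom D T \<and> adj D T (y1 + y2) = adj D T y1 + adj D T y2"
    if "y1 \<in> adj_dom D T" "y2 \<in> adj_dom D T" for y1 y2
    using adj_eqI[OF dense, of T "y1 + y2" "adj D T y1 + adj D T y2"] adj_cinner[OF dense that(1)]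
      adj_cinner[OF dense that(2)] by (simp add: cinner_add_right)
  moreover have "scaleC c y \<in> adj_dom D T \<and> adj D T (scaleC c y) = scaleC c (adj D T y)"
    if "y \<in> adj_dom D T" for y c
    using adj_eqI[OF dense, of T "scaleC c y" "scaleC c (adj D T y)"] adj_cinner[OF dense that]
    by (simp add: cinner_scaleC_right)
  moreover have "0 \<in> adj_dom D T"
    using adj_eqI[OF dense, of T 0 0] by simp
  ultimately show ?thesis by (auto simp: lin_op_def csubspace_def)
qed

lemma self_adjoint_lin_op: "self_adjoint D S \<Longrightarrow> lin_op D S"
  by (simp add: self_adjoint_def densely_defined_def)

lemma self_adjoint_dense: "self_adjoint D S \<Longrightarrow> closure D = UNIV"
  by (simp add: self_adjoint_def densely_defined_def)

lemma self_adjoint_cinner: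
  assumes "self_adjoint D S" "x \<in> D" "y \<in> D"
  shows "cinner (S x) y = cinner x (S y)"
  using adj_cinner[OF self_adjoint_dense[OF assms(1)], of y S x] assms
  by (simp add: self_adjoint_def)

lemma self_adjoint_closed_graph:
  fixes D :: "'a::chilbert set"
  assumes sa: "self_adjoint D S"
  shows "closed (graph D S)"
  unfolding closed_sequential_limits
proof (intro allI impI)
  fix p :: "nat \<Rightarrow> 'a \<times> 'a" and l
  assume h: "(\<forall>n. p n \<in> graph D S) \<and> p \<longlonglongrightarrow> l"
  define y where "y n = fst (p n)" for n
  have pn: "p n = (y n, S (y n))" "y n \<in> D" for n
  proof -
    obtain x where "p n = (x, S x)" "x \<in> D" using h unfolding graph_def by blast
    then show "p n = (y n, S (y n))" "y n \<in> D" by (simp_all add: y_def)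
  qed
  have ly: "y \<longlonglongrightarrow> fst l" unfolding y_def using h by (intro tendsto_intros) auto
  have lz: "(\<lambda>n. S (y n)) \<longlonglongrightarrow> snd l"
    using h tendsto_snd[of p l] by (simp add: pn)
  have "cinner (S x) (fst l) = cinner x (snd l)" if x: "x \<in> D" for x
  proof -
    have "(\<lambda>n. cinner (S x) (y n)) \<longlonglongrightarrow> cinner (S x) (fst l)" using ly by (intro tendsto_intros)
    moreover have "(\<lambda>n. cinner x (S (y n))) \<longlonglongrightarrow> cinner x (snd l)" using lz by (intro tendsto_intros)
    moreover have "cinner (S x) (y n) = cinner x (S (y n))" for n
      using self_adjoint_cinner[OF sa x pn(2)] .
    ultimately show ?thesis using LIMSEQ_unique by simp
  qed
  from adj_eqI[OF self_adjoint_dense[OF sa], of S "fst l" "snd l", OF this]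
  have "fst l \<in> D" "S (fst l) = snd l" using sa by (auto simp: self_adjoint_def)
  then show "l \<in> graph D S" by (auto simp: graph_def intro!: exI[of _ "fst l"])
qed

section \<open>The binomial series of the square root\<close>

text \<open>\<open>sqrt (1 - t) = (\<Sum>n. sqrt_coeff n * t ^ n)\<close> for \<open>\<bar>t\<bar> \<le> 1\<close>.\<close>

definition sqrt_coeff :: "nat \<Rightarrow> real" where
  "sqrt_coeff n = (-1)^n * ((1/2) gchoose n)"

lemma sqrt_coeff_0 [simp]: "sqrt_coeff 0 = 1"
  by (simp add: sqrt_coeff_def)

lemma gbinomial_Suc_eq: "(a::real) gchoose (Suc n) = (a gchoose n) * (a - real n) / (real n + 1)"
proof -
  have "fact (Suc n) * (a gchoose Suc n) = (\<Prod>i = 0..<Suc n. a - of_nat i)"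
    by (rule gbinomial_mult_fact)
  also have "\<dots> = fact n * (a gchoose n) * (a - real n)" by (simp add: gbinomial_mult_fact)
  finally have "fact n * ((real n + 1) * (a gchoose Suc n)) = fact n * ((a gchoose n) * (a - real n))"
    by (simp add: algebra_simps)
  then have "(real n + 1) * (a gchoose Suc n) = (a gchoose n) * (a - real n)"
    by (metis mult_left_cancel fact_nonzero)
  then show ?thesis by (simp add: field_simps)
qed

lemma sqrt_coeff_Suc: "sqrt_coeff (Suc n) = sqrt_coeff n * ((real n - 1/2) / (real n + 1))"
  by (simp add: sqrt_coeff_def gbinomial_Suc_eq field_simps)

lemma sqrt_coeff_nonpos: "n \<ge> 1 \<Longrightarrow> sqrt_coeff n \<le> 0"
proof (induction n rule: dec_induct)
  case base then show ?case by (simp add: sqrt_coeff_def)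
next
  case (step n)
  have "(real n - 1/2) / (real n + 1) \<ge> 0" using step.hyps by simp
  then show ?case using step.IH by (simp only: sqrt_coeff_Suc) (rule mult_nonpos_nonneg)
qed

lemma sum_sqrt_coeff: "(\<Sum>k\<le>m. sqrt_coeff k) = (1 - 2 * real m) * sqrt_coeff m"
proof (induction m)
  case (Suc m)
  have "(\<Sum>k\<le>Suc m. sqrt_coeff k) = (1 - 2 * real m) * sqrt_coeff m + sqrt_coeff (Suc m)"
    using Suc by simp
  also have "\<dots> = (1 - 2 * real (Suc m)) * sqrt_coeff (Suc m)"
    by (simp add: sqrt_coeff_Suc field_simps)
  finally show ?case .
qed simp

lemma sum_sqrt_coeff_Suc:
  "(\<Sum>k\<le>Suc m. sqrt_coeff k) = (\<Sum>k\<le>m. sqrt_coeff k) * ((2 * real m + 1) / (2 * real m + 2))"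
  by (simp only: sum_sqrt_coeff) (simp add: sqrt_coeff_Suc field_simps)

lemma sum_sqrt_coeff_nonneg: "0 \<le> (\<Sum>k\<le>m. sqrt_coeff k)"
proof (induction m)
  case (Suc m)
  then show ?case by (simp only: sum_sqrt_coeff_Suc) simp
qed simp

lemma power2_sum_sqrt_coeff_le: "(\<Sum>k\<le>m. sqrt_coeff k)^2 \<le> 1 / (2 * real m + 1)"
proof (induction m)
  case (Suc m)
  have "(\<Sum>k\<le>Suc m. sqrt_coeff k)^2
      = (\<Sum>k\<le>m. sqrt_coeff k)^2 * ((2 * real m + 1) / (2 * real m + 2))^2"
    by (simp only: sum_sqrt_coeff_Suc power_mult_distrib)
  also have "\<dots> \<le> 1 / (2 * real m + 1) * ((2 * real m + 1) / (2 * real m + 2))^2"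
    using Suc by (intro mult_right_mono) auto
  also have "\<dots> = (2 * real m + 1) / (2 * real m + 2)^2"
    by (simp add: power2_eq_square)
  also have "\<dots> \<le> 1 / (2 * real (Suc m) + 1)"
  proof -
    have "(2 * real m + 1) * (2 * real (Suc m) + 1) \<le> 1 * (2 * real m + 2)^2"
      by (simp add: power2_eq_square algebra_simps)
    then show ?thesis by (subst frac_le_eq) (auto intro: divide_nonpos_pos)
  qed
  finally show ?case .
qed simp

lemma sqrt_coeff_sums: "sqrt_coeff sums 0"
proof -
  have "(\<lambda>m. (\<Sum>k\<le>m. sqrt_coeff k)^2) \<longlonglongrightarrow> 0"
  proof (rule tendsto_sandwich[of "\<lambda>_. 0" _ _ "\<lambda>m. 1 / (real m + 1)"])
    have "1 / (2 * real n + 1) \<le> 1 / (real n + 1)" for n by (simp add: field_simps)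
    then show "\<forall>\<^sub>F n in sequentially. (\<Sum>k\<le>n. sqrt_coeff k)^2 \<le> 1 / (real n + 1)"
      using power2_sum_sqrt_coeff_le order_trans by (blast intro: always_eventually)
    show "(\<lambda>n. 1 / (real n + 1)) \<longlonglongrightarrow> 0"
      using LIMSEQ_inverse_real_of_nat by (simp add: inverse_eq_divide add.commute)
  qed simp_all
  then have "(\<lambda>m. sqrt ((\<Sum>k\<le>m. sqrt_coeff k)^2)) \<longlonglongrightarrow> sqrt 0" by (intro tendsto_intros)
  then have "(\<lambda>m. \<Sum>k<Suc m. sqrt_coeff k) \<longlonglongrightarrow> 0"
    using sum_sqrt_coeff_nonneg by (simp add: lessThan_Suc_atMost)
  then show ?thesis unfolding sums_def by (rule LIMSEQ_imp_Suc)
qed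

lemma sum_abs_sqrt_coeff_le: "(\<Sum>k<n. \<bar>sqrt_coeff k\<bar>) \<le> 2"
proof (cases n)
  case (Suc m)
  have "(\<Sum>k\<le>m. \<bar>sqrt_coeff k\<bar>) = 2 - (\<Sum>k\<le>m. sqrt_coeff k)"
  proof (induction m)
    case (Suc m)
    then show ?case using sqrt_coeff_nonpos[of "Suc m"] by simp
  qed simp
  then show ?thesis using Suc sum_sqrt_coeff_nonneg[of m] by (simp add: lessThan_Suc_atMost)
qed simp

lemma summable_abs_sqrt_coeff: "summable (\<lambda>n. \<bar>sqrt_coeff n\<bar>)"
  by (rule summableI_nonneg_bounded[OF _ sum_abs_sqrt_coeff_le]) simp

text \<open>The coefficient form of \<open>sqrt (1 - t) ^ 2 = 1 - t\<close>.\<close>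

lemma sqrt_coeff_convolution:
  "(\<Sum>i\<le>k. sqrt_coeff i * sqrt_coeff (k - i)) = (if k = 0 then 1 else if k = 1 then -1 else 0)"
proof -
  have "(\<Sum>i\<le>k. sqrt_coeff i * sqrt_coeff (k - i))
      = (-1)^k * (\<Sum>i\<le>k. ((1/2::real) gchoose i) * ((1/2) gchoose (k - i)))"
    unfolding sum_distrib_left
  proof (rule sum.cong[OF refl])
    fix i assume "i \<in> {..k}"
    then have "(-1::real)^i * (-1)^(k - i) = (-1)^k" by (simp flip: power_add)
    then show "sqrt_coeff i * sqrt_coeff (k - i)
        = (-1)^k * (((1/2::real) gchoose i) * ((1/2) gchoose (k - i)))"
      by (simp add: sqrt_coeff_def algebra_simps)
  qed
  also have "\<dots> = (-1)^k * ((1::real) gchoose k)"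
    using gbinomial_Vandermonde[of "1/2::real" "1/2" k] by (simp add: atMost_atLeast0)
  also have "\<dots> = (if k = 0 then 1 else if k = 1 then -1 else 0)"
    using binomial_gbinomial[of 1 k, where 'a = real] by (cases k) (auto simp: binomial_eq_0)
  finally show ?thesis .
qed

section \<open>Square roots of positive contractions\<close>

text \<open>For symmetric \<open>X\<close>, the last condition says \<open>X\<^sup>2 \<le> X\<close>, that is, \<open>0 \<le> X \<le> I\<close>.\<close>

definition pos_contraction :: "('a::complex_inner \<Rightarrow> 'a) \<Rightarrow> bool" where
  "pos_contraction X \<longleftrightarrow> (\<forall>x y. X (x + y) = X x + X y) \<and> (\<forall>c x. X (scaleC c x) = scaleC c (X x))
     \<and> (\<forall>x y. cinner (X x) y = cinner x (X y)) \<and> (\<forall>x. (norm (X x))^2 \<le> Re (cinner (X x) x))"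

context
  fixes X :: "'a::complex_inner \<Rightarrow> 'a"
  assumes X: "pos_contraction X"
begin

lemma pos_contraction_add: "X (x + y) = X x + X y"
  and pos_contraction_scaleC: "X (scaleC c x) = scaleC c (X x)"
  and pos_contraction_cinner: "cinner (X x) y = cinner x (X y)"
  and pos_contraction_power2_norm_le: "(norm (X x))^2 \<le> Re (cinner (X x) x)"
  using X by (auto simp: pos_contraction_def)

lemma pos_contraction_norm_le: "norm (X x) \<le> norm x"
proof (cases "X x = 0")
  case False
  have "norm (X x) * norm (X x) \<le> norm (X x) * norm x"
    using pos_contraction_power2_norm_le[of x] Re_cinner_le[of "X x" x]
    by (simp add: power2_eq_square)
  then show ?thesis using False by simp
qed simp

lemma bounded_linear_pos_contraction: "bounded_linear X"
  by (rule bounded_linear_intro[of _ 1])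
     (auto simp: pos_contraction_add pos_contraction_scaleC scaleR_scaleC pos_contraction_norm_le)

lemma pos_contraction_diff: "X (x - y) = X x - X y"
  using linear_diff[OF bounded_linear.linear[OF bounded_linear_pos_contraction]] .

lemma pos_contraction_Re_nonneg: "0 \<le> Re (cinner (X x) x)"
  using pos_contraction_power2_norm_le[of x] by (metis zero_le_power2 order_trans)

lemma pos_contraction_cinner_self_real: "cinner (X x) x \<in> \<real>"
  using pos_contraction_cinner[of x x] cinner_commute[of x "X x"] Reals_cnj_iff by metis

lemma pos_contraction_Re_le: "Re (cinner (X x) x) \<le> (norm x)^2"
  using Re_cinner_le[of "X x" x] pos_contraction_norm_le[of x]
  by (simp add: power2_eq_square mult_right_mono order_trans)

lemma pos_contraction_compl: "pos_contraction (id - X)"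
  unfolding pos_contraction_def minus_apply id_apply
proof (intro conjI allI)
  fix x y :: 'a and c
  show "x + y - X (x + y) = x - X x + (y - X y)" by (simp add: pos_contraction_add)
  show "scaleC c x - X (scaleC c x) = scaleC c (x - X x)"
    by (simp add: pos_contraction_scaleC scaleC_diff_right)
  show "cinner (x - X x) y = cinner x (y - X y)"
    by (simp add: cinner_diff_left cinner_diff_right pos_contraction_cinner)
  have "(norm (x - X x))^2 = (norm x)^2 + (norm (X x))^2 - 2 * Re (cinner (X x) x)"
    by (simp add: power2_norm_diff Re_cinner_commute[of x])
  also have "\<dots> \<le> Re (cinner (x - X x) x)"
    using pos_contraction_power2_norm_le[of x] by (simp add: cinner_diff_left power2_norm_eq_cinner)
  finally show "(norm (x - X x))^2 \<le> Re (cinner (x - X x) x)" .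
qed

lemma funpow_pos_contraction_add: "(X^^n) (x + y) = (X^^n) x + (X^^n) y"
  by (induction n) (auto simp: pos_contraction_add)

lemma funpow_pos_contraction_scaleC: "(X^^n) (scaleC c x) = scaleC c ((X^^n) x)"
  by (induction n) (auto simp: pos_contraction_scaleC)

lemma funpow_pos_contraction_norm_le: "norm ((X^^n) x) \<le> norm x"
  by (induction n) (auto intro: order_trans[OF pos_contraction_norm_le])

lemma lin_op_funpow_pos_contraction: "lin_op UNIV (X^^n)"
  by (simp add: lin_op_def csubspace_def funpow_pos_contraction_add funpow_pos_contraction_scaleC)

lemma funpow_pos_contraction_cinner: "cinner ((X^^(i + j)) x) y = cinner ((X^^j) x) ((X^^i) y)"
proof (induction i arbitrary: y)
  case (Suc i)
  have "cinner ((X^^(Suc i + j)) x) y = cinner ((X^^(i + j)) x) (X y)"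
    by (simp add: pos_contraction_cinner)
  also have "\<dots> = cinner ((X^^j) x) ((X^^Suc i) y)"
    by (simp add: Suc funpow_swap1)
  finally show ?case .
qed simp

lemma funpow_pos_contraction_Re_nonneg: "0 \<le> Re (cinner ((X^^n) x) x)"
proof (cases "even n")
  case True
  then obtain k where "n = k + k" by (metis evenE mult_2)
  then show ?thesis by (simp add: funpow_pos_contraction_cinner[of k k] cinner_self_eq)
next
  case False
  then obtain k where n: "n = k + Suc k" by (metis add_Suc_right oddE mult_2 add.commute plus_1_eq_Suc)
  have "cinner ((X^^n) x) x = cinner (X ((X^^k) x)) ((X^^k) x)"
    unfolding n funpow_pos_contraction_cinner by simp
  then show ?thesis using pos_contraction_Re_nonneg[of "(X^^k) x"] by simp
qed

lemma funpow_pos_contraction_Re_Suc_le: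
  "Re (cinner ((X^^Suc n) x) x) \<le> Re (cinner ((X^^n) x) x)"
proof (cases "even n")
  case True
  then obtain k where n: "n = k + k" by (metis evenE mult_2)
  have "cinner ((X^^Suc n) x) x = cinner (X ((X^^k) x)) ((X^^k) x)"
    unfolding n add_Suc_right[symmetric] funpow_pos_contraction_cinner by simp
  moreover have "cinner ((X^^n) x) x = cinner ((X^^k) x) ((X^^k) x)"
    unfolding n funpow_pos_contraction_cinner ..
  ultimately show ?thesis
    using pos_contraction_Re_le[of "(X^^k) x"] by (simp add: power2_norm_eq_cinner)
next
  case False
  then obtain k where n: "n = k + Suc k" by (metis add_Suc_right oddE mult_2 add.commute plus_1_eq_Suc)
  have "cinner ((X^^Suc n) x) x = cinner (X ((X^^k) x)) (X ((X^^k) x))"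
    unfolding n add_Suc[symmetric] funpow_pos_contraction_cinner by simp
  moreover have "cinner ((X^^n) x) x = cinner (X ((X^^k) x)) ((X^^k) x)"
    unfolding n funpow_pos_contraction_cinner by simp
  ultimately show ?thesis
    using pos_contraction_power2_norm_le[of "(X^^k) x"] by (simp add: power2_norm_eq_cinner)
qed

end

lemma tendsto_sum_square_minus_triangle:
  fixes f g :: "nat \<Rightarrow> real"
  assumes f: "summable f" "\<And>i. 0 \<le> f i" and g: "summable g" "\<And>j. 0 \<le> g j"
  shows "(\<lambda>n. \<Sum>(i, j)\<in>{..<n} \<times> {..<n} - {(i, j). i + j < n}. f i * g j) \<longlonglongrightarrow> 0"
proof -
  let ?S1 = "\<lambda>n::nat. {..<n} \<times> {..<n}"
  let ?S2 = "\<lambda>n::nat. {(i,j). i + j < n}"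
  define F where "F = (\<lambda>(i, j). f i * g j)"
  have S1_mono: "\<And>m n. m \<le> n \<Longrightarrow> ?S1 m \<subseteq> ?S1 n" by auto
  have S1_le_S2: "\<And>n. ?S1 (n div 2) \<subseteq> ?S2 n" by auto
  have finite_S1: "\<And>n. finite (?S1 n)" by simp
  have F_nonneg: "0 \<le> F p" for p using f g by (auto simp: F_def split: prod.split)
  have norm_sum_F: "norm (sum F A) = sum F A" for A
    using F_nonneg by (simp add: sum_nonneg)
  have "(\<lambda>n. (\<Sum>i<n. f i) * (\<Sum>j<n. g j)) \<longlonglongrightarrow> (\<Sum>i. f i) * (\<Sum>j. g j)"
    using f g by (intro tendsto_mult summable_LIMSEQ)
  then have "convergent (\<lambda>n. sum F (?S1 n))"
    by (auto simp: F_def sum_product sum.cartesian_product intro: convergentI)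
  then have Cauchy: "Cauchy (\<lambda>n. sum F (?S1 n))" by (rule convergent_Cauchy)
  have "Zfun (\<lambda>n. sum F (?S1 n - ?S2 n)) sequentially"
  proof (rule ZfunI, simp only: eventually_sequentially norm_sum_F)
    fix r :: real
    assume "0 < r"
    from CauchyD[OF Cauchy this] obtain N
      where "\<forall>m\<ge>N. \<forall>n\<ge>N. norm (sum F (?S1 m) - sum F (?S1 n)) < r" ..
    then have "\<And>m n. N \<le> n \<Longrightarrow> n \<le> m \<Longrightarrow> norm (sum F (?S1 m - ?S1 n)) < r"
      by (simp only: sum_diff finite_S1 S1_mono)
    then have N: "\<And>m n. N \<le> n \<Longrightarrow> n \<le> m \<Longrightarrow> sum F (?S1 m - ?S1 n) < r"
      by (simp only: norm_sum_F)
    show "\<exists>N. \<forall>n\<ge>N. sum F (?S1 n - ?S2 n) < r"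
    proof (intro exI allI impI)
      fix n
      assume "2 * N \<le> n"
      then have n: "N \<le> n div 2" by simp
      have "sum F (?S1 n - ?S2 n) \<le> sum F (?S1 n - ?S1 (n div 2))"
        by (intro sum_mono2 finite_Diff finite_S1 F_nonneg Diff_mono subset_refl S1_le_S2)
      also have "\<dots> < r"
        using n div_le_dividend by (rule N)
      finally show "sum F (?S1 n - ?S2 n) < r" .
    qed
  qed
  then show ?thesis by (simp add: tendsto_Zfun_iff F_def)
qed

text \<open>The core of Mertens' theorem on Cauchy products, for a dominated double sequence.\<close>

lemma tendsto_partial_sums_square_minus_diagonal:
  fixes G :: "nat \<Rightarrow> nat \<Rightarrow> 'a::real_normed_vector"
  assumes f: "summable f" "\<And>i. 0 \<le> f i" and g: "summable g" "\<And>j. 0 \<le> g j"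
    and bound: "\<And>i j. norm (G i j) \<le> f i * g j"
  shows "(\<lambda>n. (\<Sum>i<n. \<Sum>j<n. G i j) - (\<Sum>k<n. \<Sum>i\<le>k. G i (k - i))) \<longlonglongrightarrow> 0"
proof -
  let ?S1 = "\<lambda>n::nat. {..<n} \<times> {..<n}"
  let ?S2 = "\<lambda>n::nat. {(i,j). i + j < n}"
  define H where "H = (\<lambda>(i, j). G i j)"
  have "(\<lambda>n. sum H (?S1 n - ?S2 n)) \<longlonglongrightarrow> 0"
  proof (rule Lim_null_comparison[OF _ tendsto_sum_square_minus_triangle[OF f g]])
    have "norm (sum H (?S1 n - ?S2 n)) \<le> (\<Sum>(i, j)\<in>?S1 n - ?S2 n. f i * g j)" for n
      by (rule order_trans[OF norm_sum sum_mono]) (auto simp: H_def bound split: prod.split)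
    then show "\<forall>\<^sub>F n in sequentially. norm (sum H (?S1 n - ?S2 n))
        \<le> (\<Sum>(i, j)\<in>?S1 n - ?S2 n. f i * g j)"
      by (intro always_eventually allI)
  qed
  moreover have "sum H (?S1 n - ?S2 n) = (\<Sum>i<n. \<Sum>j<n. G i j) - (\<Sum>k<n. \<Sum>i\<le>k. G i (k - i))" for n
  proof -
    have "?S2 n \<subseteq> ?S1 n" by auto
    then have "sum H (?S1 n - ?S2 n) = sum H (?S1 n) - sum H (?S2 n)"
      by (simp add: sum_diff)
    also have "sum H (?S1 n) = (\<Sum>i<n. \<Sum>j<n. G i j)"
      by (simp add: H_def sum.cartesian_product)
    also have "sum H (?S2 n) = (\<Sum>k<n. \<Sum>i\<le>k. G i (k - i))"
      unfolding H_def by (rule sum.triangle_reindex)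
    finally show ?thesis .
  qed
  ultimately show ?thesis by simp
qed

lemma tendsto_iterate_uniformly_bounded:
  fixes L :: "nat \<Rightarrow> 'a::real_normed_vector \<Rightarrow> 'a"
  assumes lin: "\<And>n. linear (L n)" and bound: "\<And>n v. norm (L n v) \<le> K * norm v"
    and lim: "\<And>v. (\<lambda>n. L n v) \<longlonglongrightarrow> M v"
  shows "(\<lambda>n. L n (L n x)) \<longlonglongrightarrow> M (M x)"
proof -
  have "(\<lambda>n. L n (L n x - M x)) \<longlonglongrightarrow> 0"
  proof (rule Lim_null_comparison)
    show "\<forall>\<^sub>F n in sequentially. norm (L n (L n x - M x)) \<le> K * norm (L n x - M x)"
      using bound by (intro always_eventually) blast
    have "(\<lambda>n. norm (L n x - M x)) \<longlonglongrightarrow> 0"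
      by (intro tendsto_norm_zero LIM_zero lim)
    then show "(\<lambda>n. K * norm (L n x - M x)) \<longlonglongrightarrow> 0"
      by (rule tendsto_mult_right_zero)
  qed
  moreover have "(\<lambda>n. L n (M x) - M (M x)) \<longlonglongrightarrow> 0" by (intro LIM_zero lim)
  ultimately have "(\<lambda>n. L n (L n x - M x) + (L n (M x) - M (M x))) \<longlonglongrightarrow> 0"
    by (rule tendsto_add_zero)
  then show ?thesis by (simp add: linear_diff[OF lin] LIM_zero_iff)
qed

text \<open>The binomial series of \<open>sqrt (I - Y)\<close> at \<open>Y = I - X\<close>.\<close>

definition sqrt_op :: "('a::chilbert \<Rightarrow> 'a) \<Rightarrow> 'a \<Rightarrow> 'a" where
  "sqrt_op X x = (\<Sum>n. sqrt_coeff n *\<^sub>R ((id - X)^^n) x)"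

context
  fixes X :: "'a::chilbert \<Rightarrow> 'a"
  assumes X: "pos_contraction X"
begin

lemma norm_sqrt_op_term_le: "norm (sqrt_coeff n *\<^sub>R ((id - X)^^n) x) \<le> \<bar>sqrt_coeff n\<bar> * norm x"
proof -
  have "\<bar>sqrt_coeff n\<bar> * norm (((id - X)^^n) x) \<le> \<bar>sqrt_coeff n\<bar> * norm x"
    using funpow_pos_contraction_norm_le[OF pos_contraction_compl[OF X], of n x]
    by (rule mult_left_mono) simp
  then show ?thesis by simp
qed

lemma summable_norm_sqrt_op_series: "summable (\<lambda>n. norm (sqrt_coeff n *\<^sub>R ((id - X)^^n) x))"
  by (rule summable_comparison_test'[OF summable_mult2[OF summable_abs_sqrt_coeff, of "norm x"]])
     (simp only: real_norm_def abs_norm_cancel norm_sqrt_op_term_le)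

lemma summable_sqrt_op_series: "summable (\<lambda>n. sqrt_coeff n *\<^sub>R ((id - X)^^n) x)"
  by (rule summable_norm_cancel[OF summable_norm_sqrt_op_series])

lemma sqrt_op_add: "sqrt_op X (x + y) = sqrt_op X x + sqrt_op X y"
  unfolding sqrt_op_def
  by (simp add: suminf_add[OF summable_sqrt_op_series summable_sqrt_op_series] scaleR_add_right
      funpow_pos_contraction_add[OF pos_contraction_compl[OF X]])

lemma sqrt_op_scaleC: "sqrt_op X (scaleC c x) = scaleC c (sqrt_op X x)"
proof -
  have "scaleC c (sqrt_op X x) = (\<Sum>n. scaleC c (sqrt_coeff n *\<^sub>R ((id - X)^^n) x))"
    unfolding sqrt_op_def
    by (rule bounded_linear.suminf[OF bounded_linear_scaleC summable_sqrt_op_series])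
  also have "\<dots> = sqrt_op X (scaleC c x)"
    unfolding sqrt_op_def
    by (simp add: funpow_pos_contraction_scaleC[OF pos_contraction_compl[OF X]] scaleR_scaleC
        scaleC_scaleC mult.commute)
  finally show ?thesis by simp
qed

lemma sqrt_op_commute:
  assumes Z: "bounded_linear Z" and comm: "\<And>v. Z (X v) = X (Z v)"
  shows "Z (sqrt_op X x) = sqrt_op X (Z x)"
proof -
  have "Z (((id - X)^^n) v) = ((id - X)^^n) (Z v)" for n v
    by (induction n arbitrary: v)
      (simp_all add: linear_diff[OF bounded_linear.linear[OF Z]] comm)
  then show ?thesis
    unfolding sqrt_op_def
    by (simp add: bounded_linear.suminf[OF Z summable_sqrt_op_series]
        linear.scaleR[OF bounded_linear.linear[OF Z]])
qed

lemma sqrt_op_cinner: "cinner (sqrt_op X x) y = cinner x (sqrt_op X y)"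
proof -
  have "cinner (sqrt_op X x) y = (\<Sum>n. cinner (sqrt_coeff n *\<^sub>R ((id - X)^^n) x) y)"
    unfolding sqrt_op_def
    by (rule bounded_linear.suminf[OF bounded_linear_cinner_left summable_sqrt_op_series])
  also have "\<dots> = (\<Sum>n. cinner x (sqrt_coeff n *\<^sub>R ((id - X)^^n) y))"
    using funpow_pos_contraction_cinner[OF pos_contraction_compl[OF X], of _ 0]
    by (simp add: cinner_scaleR_left cinner_scaleR_right)
  also have "\<dots> = cinner x (sqrt_op X y)"
    unfolding sqrt_op_def
    by (rule bounded_linear.suminf[OF bounded_linear_cinner_right summable_sqrt_op_series, symmetric])
  finally show ?thesis .
qed

end

context
  fixes X :: "'a::chilbert \<Rightarrow> 'a"
  assumes X: "pos_contraction X"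
begin

lemma Re_cinner_sqrt_op_ge: "Re (cinner (X x) x) \<le> Re (cinner (sqrt_op X x) x)"
proof -
  define a where "a n = Re (cinner (((id - X)^^n) x) x)" for n
  define b where "b n = (if n = 0 then a 0 else a 1)" for n :: nat
  have Y: "pos_contraction (id - X)" by (rule pos_contraction_compl[OF X])
  have "Re (cinner (sqrt_op X x) x) = (\<Sum>n. Re (cinner (sqrt_coeff n *\<^sub>R ((id - X)^^n) x) x))"
    unfolding sqrt_op_def
    using bounded_linear.suminf[OF bounded_linear_compose[OF bounded_linear_Re bounded_linear_cinner_left]
        summable_sqrt_op_series[OF X]]
    by simp
  then have sqrt_eq: "Re (cinner (sqrt_op X x) x) = (\<Sum>n. sqrt_coeff n * a n)"
    by (simp add: a_def cinner_scaleR_left)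
  have dec: "decseq a"
    unfolding a_def by (rule decseq_SucI) (rule funpow_pos_contraction_Re_Suc_le[OF Y])
  have "\<bar>a n\<bar> \<le> (norm x)^2" for n
    using funpow_pos_contraction_Re_nonneg[OF Y, of n x] decseqD[OF dec, of 0 n]
    by (simp add: a_def power2_norm_eq_cinner)
  then have "norm (sqrt_coeff n * a n) \<le> \<bar>sqrt_coeff n\<bar> * (norm x)^2" for n
    unfolding real_norm_def abs_mult by (rule mult_left_mono) simp
  then have sa: "summable (\<lambda>n. sqrt_coeff n * a n)"
    by (rule summable_comparison_test'[OF summable_mult2[OF summable_abs_sqrt_coeff]])
  have sb: "(\<lambda>n. sqrt_coeff n * b n) sums (a 0 - a 1)"
  proof -
    have e: "sqrt_coeff n * b n = a 1 * sqrt_coeff n + (if n = 0 then a 0 - a 1 else 0)" for n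
      by (simp add: b_def algebra_simps)
    have "(\<lambda>n. a 1 * sqrt_coeff n) sums (a 1 * 0)" by (rule sums_mult[OF sqrt_coeff_sums])
    moreover have "(\<lambda>n. if n = 0 then a 0 - a 1 else 0) sums (a 0 - a 1)"
      using sums_single[of 0 "\<lambda>_. a 0 - a 1"] by simp
    ultimately show ?thesis unfolding e using sums_add by fastforce
  qed
  have le: "sqrt_coeff n * b n \<le> sqrt_coeff n * a n" for n
  proof (cases "n = 0")
    case False
    then have "a n \<le> a 1" using decseqD[OF dec, of 1 n] by simp
    then show ?thesis
      using False sqrt_coeff_nonpos[of n] by (simp add: b_def mult_left_mono_neg)
  qed (simp add: b_def)
  have "a 0 - a 1 \<le> (\<Sum>n. sqrt_coeff n * a n)"
    using sums_le[OF le sb summable_sums[OF sa]] .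
  then show ?thesis
    by (simp add: sqrt_eq a_def cinner_diff_left power2_norm_eq_cinner)
qed

lemma sqrt_op_series_diagonal_sum:
  assumes "n \<ge> 2"
  shows "(\<Sum>k<n. \<Sum>i\<le>k. (sqrt_coeff i * sqrt_coeff (k - i)) *\<^sub>R ((id - X)^^(i + (k - i))) x) = X x"
proof -
  have "(\<Sum>k<n. \<Sum>i\<le>k. (sqrt_coeff i * sqrt_coeff (k - i)) *\<^sub>R ((id - X)^^(i + (k - i))) x)
      = (\<Sum>k<n. (\<Sum>i\<le>k. sqrt_coeff i * sqrt_coeff (k - i)) *\<^sub>R ((id - X)^^k) x)"
    by (simp add: scaleR_sum_left)
  also have "\<dots> = X x"
    using assms
  proof (induction n rule: dec_induct)
    case base
    have "{..<2::nat} = {0, 1}" by auto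
    then show ?case by (simp add: sqrt_coeff_convolution)
  qed (simp add: sqrt_coeff_convolution)
  finally show ?thesis .
qed

lemma sqrt_op_sqrt_op: "sqrt_op X (sqrt_op X x) = X x"
proof -
  define L where "L n v = (\<Sum>i<n. sqrt_coeff i *\<^sub>R ((id - X)^^i) v)" for n v
  define G where "G i j = (sqrt_coeff i * sqrt_coeff j) *\<^sub>R ((id - X)^^(i + j)) x" for i j
  have Y: "pos_contraction (id - X)" by (rule pos_contraction_compl[OF X])
  have lin: "lin_op UNIV ((id - X)^^n)" for n by (rule lin_op_funpow_pos_contraction[OF Y])
  have "linear (L n)" for n
    by (rule linearI) (simp_all add: L_def lin_op_add[OF lin] lin_op_scaleR[OF lin]
        scaleR_add_right sum.distrib scaleR_sum_right mult.commute)
  moreover have "norm (L n v) \<le> 2 * norm v" for n v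
  proof -
    have "norm (L n v) \<le> (\<Sum>i<n. \<bar>sqrt_coeff i\<bar> * norm v)"
      unfolding L_def by (rule order_trans[OF norm_sum sum_mono[OF norm_sqrt_op_term_le[OF X]]])
    also have "\<dots> \<le> 2 * norm v"
      unfolding sum_distrib_right[symmetric] by (rule mult_right_mono[OF sum_abs_sqrt_coeff_le]) simp
    finally show ?thesis .
  qed
  moreover have "(\<lambda>n. L n v) \<longlonglongrightarrow> sqrt_op X v" for v
    unfolding L_def sqrt_op_def by (rule summable_LIMSEQ[OF summable_sqrt_op_series[OF X]])
  ultimately have sq: "(\<lambda>n. L n (L n x)) \<longlonglongrightarrow> sqrt_op X (sqrt_op X x)"
    by (rule tendsto_iterate_uniformly_bounded)
  have LL: "L n (L n x) = (\<Sum>i<n. \<Sum>j<n. G i j)" for n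
    by (simp add: L_def G_def lin_op_sum[OF lin] lin_op_scaleR[OF lin] scaleR_sum_right funpow_add)
  have bound: "norm (G i j) \<le> (\<bar>sqrt_coeff i\<bar> * norm x) * \<bar>sqrt_coeff j\<bar>" for i j
  proof -
    have "norm (G i j) = (\<bar>sqrt_coeff i\<bar> * \<bar>sqrt_coeff j\<bar>) * norm (((id - X)^^(i + j)) x)"
      by (simp add: G_def abs_mult)
    also have "\<dots> \<le> (\<bar>sqrt_coeff i\<bar> * \<bar>sqrt_coeff j\<bar>) * norm x"
      by (rule mult_left_mono[OF funpow_pos_contraction_norm_le[OF Y]]) simp
    finally show ?thesis by (simp only: ac_simps)
  qed
  have "(\<lambda>n. L n (L n x) - (\<Sum>k<n. \<Sum>i\<le>k. G i (k - i))) \<longlonglongrightarrow> 0"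
    unfolding LL
    by (rule tendsto_partial_sums_square_minus_diagonal[OF summable_mult2[OF summable_abs_sqrt_coeff]
          _ summable_abs_sqrt_coeff _ bound]) simp_all
  moreover have "\<forall>\<^sub>F n in sequentially. (\<Sum>k<n. \<Sum>i\<le>k. G i (k - i)) = X x"
    unfolding G_def by (rule eventually_sequentiallyI[of 2]) (rule sqrt_op_series_diagonal_sum)
  then have "\<forall>\<^sub>F n in sequentially. L n (L n x) - (\<Sum>k<n. \<Sum>i\<le>k. G i (k - i)) = L n (L n x) - X x"
    by eventually_elim simp
  ultimately have "(\<lambda>n. L n (L n x) - X x) \<longlonglongrightarrow> 0"
    by (rule Lim_transform_eventually)
  with sq show ?thesis by (metis LIMSEQ_unique LIM_zero_cancel)
qed

lemma pos_contraction_sqrt_op: "pos_contraction (sqrt_op X)"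
  unfolding pos_contraction_def
proof (intro conjI allI)
  fix x y :: 'a and c
  show "sqrt_op X (x + y) = sqrt_op X x + sqrt_op X y" by (rule sqrt_op_add[OF X])
  show "sqrt_op X (scaleC c x) = scaleC c (sqrt_op X x)" by (rule sqrt_op_scaleC[OF X])
  show "cinner (sqrt_op X x) y = cinner x (sqrt_op X y)" by (rule sqrt_op_cinner[OF X])
  have "(norm (sqrt_op X x))^2 = Re (cinner (X x) x)"
    using sqrt_op_cinner[OF X, of "sqrt_op X x" x] by (simp add: power2_norm_eq_cinner sqrt_op_sqrt_op)
  also have "\<dots> \<le> Re (cinner (sqrt_op X x) x)" by (rule Re_cinner_sqrt_op_ge)
  finally show "(norm (sqrt_op X x))^2 \<le> Re (cinner (sqrt_op X x) x)" .
qed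

end

section \<open>The resolvent \<open>(I + T\<^sup>*T)\<^sup>-\<^sup>1\<close> of a closed operator\<close>

locale closed_densely_defined =
  fixes D :: "'a::chilbert set" and T :: "'a \<Rightarrow> 'b::chilbert"
  assumes densely_defined: "densely_defined D T" and closed: "closed_op D T"
begin

lemma lin_op_T: "lin_op D T"
  using densely_defined by (simp add: densely_defined_def)

lemma dense_D: "closure D = UNIV"
  using densely_defined by (simp add: densely_defined_def)

lemma closed_graph_T: "closed (graph D T)"
  using closed by (simp add: closed_op_def)

abbreviation TsT_dom :: "'a set" where
  "TsT_dom \<equiv> comp_dom (adj_dom D T) (adj D T) D T"

abbreviation TsT :: "'a \<Rightarrow> 'a" where
  "TsT x \<equiv> adj D T (T x)"

lemma TsT_domD: "x \<in> TsT_dom \<Longrightarrow> x \<in> D"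
  by (simp add: comp_dom_def)

lemma cinner_TsT: "x \<in> TsT_dom \<Longrightarrow> w \<in> D \<Longrightarrow> cinner (T w) (T x) = cinner w (TsT x)"
  by (rule adj_cinner[OF dense_D]) (simp_all add: comp_dom_def)

lemma lin_op_TsT: "lin_op TsT_dom TsT"
  using lin_op_comp[OF lin_op_adj[OF dense_D] lin_op_T] by (simp add: o_def)

lemma cinner_self_TsT: "x \<in> TsT_dom \<Longrightarrow> cinner x (TsT x) = complex_of_real ((norm (T x))^2)"
  using cinner_TsT[of x x] TsT_domD by (simp add: cinner_self_eq)

text \<open>Von Neumann's argument: project \<open>(h, 0)\<close> onto the closed graph of \<open>T\<close>.\<close>

lemma ex_preimage_I_plus_TsT: "\<exists>u\<in>TsT_dom. u + TsT u = h"
proof -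
  obtain p where p: "p \<in> graph D T" "(h, 0) - p \<in> orthogonal_complement (graph D T)"
    using orthogonal_projection_exists[OF graph_csubspace[OF lin_op_T] closed_graph_T] by blast
  then obtain u where u: "u \<in> D" "p = (u, T u)" by (auto simp: graph_def)
  have "cinner (h - u) x - cinner (T u) (T x) = 0" if "x \<in> D" for x
    using orthogonal_complementD[OF p(2), of "(x, T x)"] that u
    by (simp add: graph_def cinner_Pair cinner_minus_left)
  then have "cinner (T x) (T u) = cinner x (h - u)" if "x \<in> D" for x
    using that by (metis cinner_commute eq_iff_diff_eq_0)
  then have "T u \<in> adj_dom D T" "TsT u = h - u" using adj_eqI[OF dense_D] by blast+
  then show ?thesis using u by (intro bexI[of _ u]) (auto simp: comp_dom_def)
qed

lemma I_plus_TsT_inj: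
  assumes "u \<in> TsT_dom" "v \<in> TsT_dom" "u + TsT u = v + TsT v"
  shows "u = v"
proof -
  define w where "w = u - v"
  have w: "w \<in> TsT_dom" using assms lin_op_TsT by (simp add: w_def lin_op_csubspace csubspace_diff)
  have "TsT w = TsT u - TsT v" using lin_op_diff[OF lin_op_TsT assms(1,2)] by (simp add: w_def)
  then have "w + TsT w = (u + TsT u) - (v + TsT v)" by (simp add: w_def algebra_simps)
  then have "w + TsT w = 0" using assms(3) by simp
  then have "cinner w (w + TsT w) = 0" by simp
  then have "complex_of_real ((norm w)^2 + (norm (T w))^2) = 0"
    using cinner_self_TsT[OF w] by (simp add: cinner_add_right cinner_self_eq)
  then have "(norm w)^2 + (norm (T w))^2 = 0" by (simp only: of_real_eq_0_iff)
  then have "norm w = 0" by (simp add: add_nonneg_eq_0_iff)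
  then show ?thesis by (simp add: w_def)
qed

definition resolvent :: "'a \<Rightarrow> 'a" where
  "resolvent h = (THE u. u \<in> TsT_dom \<and> u + TsT u = h)"

lemma resolvent_in_TsT_dom: "resolvent h \<in> TsT_dom"
  and resolvent_plus_TsT: "resolvent h + TsT (resolvent h) = h"
proof -
  have "\<exists>!u. u \<in> TsT_dom \<and> u + TsT u = h"
    using ex_preimage_I_plus_TsT I_plus_TsT_inj by metis
  then have "resolvent h \<in> TsT_dom \<and> resolvent h + TsT (resolvent h) = h"
    unfolding resolvent_def by (rule theI')
  then show "resolvent h \<in> TsT_dom" "resolvent h + TsT (resolvent h) = h" by simp_all
qed

lemma resolvent_in_D: "resolvent h \<in> D"
  using resolvent_in_TsT_dom by (rule TsT_domD)

lemma TsT_resolvent: "TsT (resolvent h) = h - resolvent h"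
  using resolvent_plus_TsT[of h] by (metis add_diff_cancel_left')

lemma resolvent_I_plus_TsT: "u \<in> TsT_dom \<Longrightarrow> resolvent (u + TsT u) = u"
  using I_plus_TsT_inj resolvent_in_TsT_dom resolvent_plus_TsT by blast

lemma range_resolvent: "range resolvent = TsT_dom"
  using resolvent_in_TsT_dom resolvent_I_plus_TsT by (metis image_subsetI subsetI subset_antisym rangeI)

lemma resolvent_add: "resolvent (x + y) = resolvent x + resolvent y"
proof -
  have "resolvent x + resolvent y \<in> TsT_dom"
    using resolvent_in_TsT_dom lin_op_TsT by (simp add: lin_op_csubspace csubspace_add)
  moreover have "(resolvent x + resolvent y) + TsT (resolvent x + resolvent y) = x + y"
    using lin_op_add[OF lin_op_TsT resolvent_in_TsT_dom resolvent_in_TsT_dom] resolvent_plus_TsT[of x] resolvent_plus_TsT[of y]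
    by (simp add: algebra_simps)
  ultimately show ?thesis using resolvent_I_plus_TsT by metis
qed

lemma resolvent_scaleC: "resolvent (scaleC c x) = scaleC c (resolvent x)"
proof -
  have "scaleC c (resolvent x) \<in> TsT_dom"
    using resolvent_in_TsT_dom lin_op_TsT by (simp add: lin_op_csubspace csubspace_scaleC)
  moreover have "scaleC c (resolvent x) + TsT (scaleC c (resolvent x)) = scaleC c x"
    using lin_op_scaleC[OF lin_op_TsT resolvent_in_TsT_dom] resolvent_plus_TsT[of x]
      scaleC_add_right[of c "resolvent x" "TsT (resolvent x)"] by simp
  ultimately show ?thesis using resolvent_I_plus_TsT by metis
qed

lemma cinner_resolvent:
  "cinner (resolvent h) g = cinner (resolvent h) (resolvent g) + cinner (T (resolvent h)) (T (resolvent g))"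
proof -
  have "cinner (resolvent h) g = cinner (resolvent h) (resolvent g + TsT (resolvent g))"
    using resolvent_plus_TsT[of g] by simp
  also have "\<dots> = cinner (resolvent h) (resolvent g) + cinner (resolvent h) (TsT (resolvent g))"
    by (simp add: cinner_add_right)
  also have "cinner (resolvent h) (TsT (resolvent g)) = cinner (T (resolvent h)) (T (resolvent g))"
    using cinner_TsT[OF resolvent_in_TsT_dom resolvent_in_D] by simp
  finally show ?thesis .
qed

lemma resolvent_cinner: "cinner (resolvent h) g = cinner h (resolvent g)"
proof -
  have "cinner h (resolvent g) = cnj (cinner (resolvent g) h)" by (rule cinner_commute)
  also have "\<dots> = cnj (cinner (resolvent g) (resolvent h)) + cnj (cinner (T (resolvent g)) (T (resolvent h)))"
    by (simp add: cinner_resolvent[of g h])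
  also have "\<dots> = cinner (resolvent h) (resolvent g) + cinner (T (resolvent h)) (T (resolvent g))"
    by (simp only: cinner_commute[of "resolvent h"] cinner_commute[of "T (resolvent h)"])
  finally show ?thesis using cinner_resolvent[of h g] by simp
qed

lemma pos_contraction_resolvent: "pos_contraction resolvent"
proof -
  have "(norm (resolvent x))^2 \<le> Re (cinner (resolvent x) x)" for x
    using cinner_resolvent[of x x] by (simp add: cinner_self_eq)
  then show ?thesis
    unfolding pos_contraction_def using resolvent_add resolvent_scaleC resolvent_cinner by blast
qed

lemma resolvent_eq_0D: "resolvent h = 0 \<Longrightarrow> h = 0"
  using resolvent_plus_TsT[of h] lin_op_0[OF lin_op_TsT] by simp

end

section \<open>Existence of \<open>|T|\<close>\<close>

context closed_densely_defined
begin

definition sqrt_resolvent :: "'a \<Rightarrow> 'a" where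
  "sqrt_resolvent = sqrt_op resolvent"

definition sqrt_compl_resolvent :: "'a \<Rightarrow> 'a" where
  "sqrt_compl_resolvent = sqrt_op (id - resolvent)"

lemma pos_contraction_sqrt_resolvent: "pos_contraction sqrt_resolvent"
  unfolding sqrt_resolvent_def by (rule pos_contraction_sqrt_op[OF pos_contraction_resolvent])

lemma pos_contraction_sqrt_compl_resolvent: "pos_contraction sqrt_compl_resolvent"
  unfolding sqrt_compl_resolvent_def
  by (rule pos_contraction_sqrt_op[OF pos_contraction_compl[OF pos_contraction_resolvent]])

lemma sqrt_resolvent_sqrt_resolvent: "sqrt_resolvent (sqrt_resolvent x) = resolvent x"
  unfolding sqrt_resolvent_def by (rule sqrt_op_sqrt_op[OF pos_contraction_resolvent])

lemma sqrt_compl_resolvent_sqrt_compl_resolvent: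
  "sqrt_compl_resolvent (sqrt_compl_resolvent x) = x - resolvent x"
  unfolding sqrt_compl_resolvent_def
  using sqrt_op_sqrt_op[OF pos_contraction_compl[OF pos_contraction_resolvent]] by simp

lemma sqrt_resolvent_commute:
  assumes "bounded_linear Z" "\<And>v. Z (resolvent v) = resolvent (Z v)"
  shows "Z (sqrt_resolvent x) = sqrt_resolvent (Z x)"
  unfolding sqrt_resolvent_def by (rule sqrt_op_commute[OF pos_contraction_resolvent assms])

lemma sqrt_compl_resolvent_commute:
  assumes Z: "bounded_linear Z" and comm: "\<And>v. Z (resolvent v) = resolvent (Z v)"
  shows "Z (sqrt_compl_resolvent x) = sqrt_compl_resolvent (Z x)"
  unfolding sqrt_compl_resolvent_def
proof (rule sqrt_op_commute[OF pos_contraction_compl[OF pos_contraction_resolvent] Z])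
  show "Z ((id - resolvent) v) = (id - resolvent) (Z v)" for v
    using linear_diff[OF bounded_linear.linear[OF Z]] comm by simp
qed

lemma sqrt_compl_resolvent_sqrt_resolvent:
  "sqrt_compl_resolvent (sqrt_resolvent x) = sqrt_resolvent (sqrt_compl_resolvent x)"
proof (rule sqrt_resolvent_commute[OF bounded_linear_pos_contraction[OF pos_contraction_sqrt_compl_resolvent]])
  show "sqrt_compl_resolvent (resolvent v) = resolvent (sqrt_compl_resolvent v)" for v
    by (rule sqrt_compl_resolvent_commute[OF bounded_linear_pos_contraction[OF pos_contraction_resolvent],
          symmetric]) simp
qed

lemma inj_sqrt_resolvent: "inj sqrt_resolvent"
proof (rule injI)
  fix x y assume "sqrt_resolvent x = sqrt_resolvent y"
  then have "resolvent x = resolvent y" by (metis sqrt_resolvent_sqrt_resolvent)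
  then have "resolvent (x - y) = 0" by (simp add: pos_contraction_diff[OF pos_contraction_resolvent])
  then have "x - y = 0" by (rule resolvent_eq_0D)
  then show "x = y" by simp
qed

lemma sqrt_resolvent_decomp: "sqrt_resolvent (sqrt_resolvent y) + sqrt_compl_resolvent (sqrt_compl_resolvent y) = y"
  by (simp add: sqrt_resolvent_sqrt_resolvent sqrt_compl_resolvent_sqrt_compl_resolvent)

text \<open>Formally \<open>|T| = (I - A)\<^sup>1\<^sup>/\<^sup>2 A\<^sup>-\<^sup>1\<^sup>/\<^sup>2\<close> with \<open>A = (I + T\<^sup>*T)\<^sup>-\<^sup>1\<close>,
  defined on the range of \<open>A\<^sup>1\<^sup>/\<^sup>2\<close>.\<close>

definition sqrt_TsT_dom :: "'a set" where
  "sqrt_TsT_dom = range sqrt_resolvent"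

definition sqrt_TsT :: "'a \<Rightarrow> 'a" where
  "sqrt_TsT y = (if y \<in> sqrt_TsT_dom then sqrt_compl_resolvent (inv sqrt_resolvent y) else 0)"

lemma sqrt_TsT_sqrt_resolvent: "sqrt_TsT (sqrt_resolvent u) = sqrt_compl_resolvent u"
  by (simp add: sqrt_TsT_def sqrt_TsT_dom_def inv_f_f[OF inj_sqrt_resolvent])

lemma csubspace_sqrt_TsT_dom: "csubspace sqrt_TsT_dom"
  unfolding sqrt_TsT_dom_def
  by (rule csubspace_image[of UNIV, simplified])
    (simp add: lin_op_def csubspace_def pos_contraction_add[OF pos_contraction_sqrt_resolvent]
      pos_contraction_scaleC[OF pos_contraction_sqrt_resolvent])

lemma lin_op_sqrt_TsT: "lin_op sqrt_TsT_dom sqrt_TsT"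
proof -
  have "sqrt_TsT (sqrt_resolvent u + sqrt_resolvent v) = sqrt_TsT (sqrt_resolvent u) + sqrt_TsT (sqrt_resolvent v)" for u v
    by (simp add: pos_contraction_add[OF pos_contraction_sqrt_resolvent, symmetric]
        sqrt_TsT_sqrt_resolvent pos_contraction_add[OF pos_contraction_sqrt_compl_resolvent])
  moreover have "sqrt_TsT (scaleC c (sqrt_resolvent u)) = scaleC c (sqrt_TsT (sqrt_resolvent u))" for u c
    by (simp add: pos_contraction_scaleC[OF pos_contraction_sqrt_resolvent, symmetric]
        sqrt_TsT_sqrt_resolvent pos_contraction_scaleC[OF pos_contraction_sqrt_compl_resolvent])
  ultimately show ?thesis
    using csubspace_sqrt_TsT_dom by (auto simp: lin_op_def sqrt_TsT_dom_def)
qed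

lemma dense_sqrt_TsT_dom: "closure sqrt_TsT_dom = UNIV"
proof (rule dense_if_orthogonal_complement_trivial[OF csubspace_sqrt_TsT_dom], rule subsetI)
  fix z assume "z \<in> orthogonal_complement sqrt_TsT_dom"
  then have "cinner (sqrt_resolvent z) u = 0" for u
    using orthogonal_complementD[of z sqrt_TsT_dom "sqrt_resolvent u"]
    by (simp add: sqrt_TsT_dom_def pos_contraction_cinner[OF pos_contraction_sqrt_resolvent])
  then have "sqrt_resolvent z = 0" by (rule cinner_all_zero_imp_zero)
  moreover have "sqrt_resolvent 0 = 0"
    using pos_contraction_scaleC[OF pos_contraction_sqrt_resolvent, of 0 0] by simp
  ultimately have "sqrt_resolvent z = sqrt_resolvent 0" by simp
  then show "z \<in> {0}" using inj_sqrt_resolvent by (simp add: inj_eq)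
qed

lemma adj_sqrt_TsT_sqrt_resolvent:
  "sqrt_resolvent w \<in> adj_dom sqrt_TsT_dom sqrt_TsT"
  "adj sqrt_TsT_dom sqrt_TsT (sqrt_resolvent w) = sqrt_compl_resolvent w"
proof -
  have "cinner (sqrt_TsT x) (sqrt_resolvent w) = cinner x (sqrt_compl_resolvent w)"
    if x: "x \<in> sqrt_TsT_dom" for x
  proof -
    obtain u where u: "x = sqrt_resolvent u" using x by (auto simp: sqrt_TsT_dom_def)
    have "cinner (sqrt_compl_resolvent u) (sqrt_resolvent w) = cinner u (sqrt_resolvent (sqrt_compl_resolvent w))"
      by (simp add: pos_contraction_cinner[OF pos_contraction_sqrt_compl_resolvent]
          sqrt_compl_resolvent_sqrt_resolvent)
    then show ?thesis
      by (simp add: u sqrt_TsT_sqrt_resolvent pos_contraction_cinner[OF pos_contraction_sqrt_resolvent])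
  qed
  then show "sqrt_resolvent w \<in> adj_dom sqrt_TsT_dom sqrt_TsT"
    "adj sqrt_TsT_dom sqrt_TsT (sqrt_resolvent w) = sqrt_compl_resolvent w"
    using adj_eqI[OF dense_sqrt_TsT_dom] by blast+
qed

lemma adj_dom_sqrt_TsT: "adj_dom sqrt_TsT_dom sqrt_TsT = sqrt_TsT_dom"
proof
  show "sqrt_TsT_dom \<subseteq> adj_dom sqrt_TsT_dom sqrt_TsT"
    using adj_sqrt_TsT_sqrt_resolvent(1) by (auto simp: sqrt_TsT_dom_def)
  show "adj_dom sqrt_TsT_dom sqrt_TsT \<subseteq> sqrt_TsT_dom"
  proof
    fix y assume y: "y \<in> adj_dom sqrt_TsT_dom sqrt_TsT"
    define z where "z = adj sqrt_TsT_dom sqrt_TsT y"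
    have "cinner u (sqrt_compl_resolvent y - sqrt_resolvent z) = 0" for u
    proof -
      have "sqrt_resolvent u \<in> sqrt_TsT_dom" by (simp add: sqrt_TsT_dom_def)
      from adj_cinner[OF dense_sqrt_TsT_dom y this]
      have "cinner (sqrt_compl_resolvent u) y = cinner (sqrt_resolvent u) z"
        by (simp add: sqrt_TsT_sqrt_resolvent z_def)
      then show ?thesis
        by (simp add: cinner_diff_right pos_contraction_cinner[OF pos_contraction_sqrt_compl_resolvent]
            pos_contraction_cinner[OF pos_contraction_sqrt_resolvent])
    qed
    then have "sqrt_compl_resolvent y - sqrt_resolvent z = 0"
      using cinner_self_zero by blast
    then have "y = sqrt_resolvent (sqrt_resolvent y) + sqrt_resolvent (sqrt_compl_resolvent z)"
      using sqrt_resolvent_decomp[of y] sqrt_compl_resolvent_sqrt_resolvent[of z] by simp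
    also have "\<dots> = sqrt_resolvent (sqrt_resolvent y + sqrt_compl_resolvent z)"
      by (simp add: pos_contraction_add[OF pos_contraction_sqrt_resolvent])
    finally show "y \<in> sqrt_TsT_dom" by (simp add: sqrt_TsT_dom_def)
  qed
qed

lemma self_adjoint_sqrt_TsT: "self_adjoint sqrt_TsT_dom sqrt_TsT"
  unfolding self_adjoint_def densely_defined_def
  using lin_op_sqrt_TsT dense_sqrt_TsT_dom adj_dom_sqrt_TsT adj_sqrt_TsT_sqrt_resolvent(2)
    sqrt_TsT_sqrt_resolvent
  by (auto simp: sqrt_TsT_dom_def)

text \<open>Positivity: \<open>\<langle>C B\<^sup>-\<^sup>1 y, y\<rangle> = \<langle>C Q u, Q u\<rangle>\<close> for \<open>y = B u\<close> and \<open>Q = B\<^sup>1\<^sup>/\<^sup>2\<close>,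
  since \<open>Q\<close> commutes with \<open>C\<close>.\<close>

lemma positive_op_sqrt_TsT: "positive_op sqrt_TsT_dom sqrt_TsT"
  unfolding positive_op_def
proof
  fix y assume "y \<in> sqrt_TsT_dom"
  then obtain u where u: "y = sqrt_resolvent u" by (auto simp: sqrt_TsT_dom_def)
  define Q where "Q = sqrt_op sqrt_resolvent"
  have Q: "pos_contraction Q"
    unfolding Q_def by (rule pos_contraction_sqrt_op[OF pos_contraction_sqrt_resolvent])
  have CQ: "sqrt_compl_resolvent (Q v) = Q (sqrt_compl_resolvent v)" for v
    unfolding Q_def
    by (rule sqrt_op_commute[OF pos_contraction_sqrt_resolvent
          bounded_linear_pos_contraction[OF pos_contraction_sqrt_compl_resolvent]])
      (rule sqrt_compl_resolvent_sqrt_resolvent)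
  have "cinner (sqrt_TsT y) y = cinner (sqrt_compl_resolvent u) (Q (Q u))"
    by (simp add: u sqrt_TsT_sqrt_resolvent Q_def sqrt_op_sqrt_op[OF pos_contraction_sqrt_resolvent])
  also have "\<dots> = cinner (sqrt_compl_resolvent (Q u)) (Q u)"
    by (simp add: pos_contraction_cinner[OF Q, symmetric] CQ)
  finally show "cinner (sqrt_TsT y) y \<in> \<real> \<and> 0 \<le> Re (cinner (sqrt_TsT y) y)"
    using pos_contraction_cinner_self_real[OF pos_contraction_sqrt_compl_resolvent]
      pos_contraction_Re_nonneg[OF pos_contraction_sqrt_compl_resolvent] by simp
qed

lemma comp_dom_sqrt_TsT: "comp_dom sqrt_TsT_dom sqrt_TsT sqrt_TsT_dom sqrt_TsT = TsT_dom"
proof -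
  have "{x \<in> range sqrt_resolvent. sqrt_TsT x \<in> range sqrt_resolvent} = range resolvent"
  proof (intro equalityI subsetI)
    fix x assume "x \<in> {x \<in> range sqrt_resolvent. sqrt_TsT x \<in> range sqrt_resolvent}"
    then obtain y z where y: "x = sqrt_resolvent y" and z: "sqrt_compl_resolvent y = sqrt_resolvent z"
      by (auto simp: sqrt_TsT_sqrt_resolvent)
    have "y = sqrt_resolvent (sqrt_resolvent y) + sqrt_resolvent (sqrt_compl_resolvent z)"
      using sqrt_resolvent_decomp[of y] z sqrt_compl_resolvent_sqrt_resolvent[of z] by simp
    also have "\<dots> = sqrt_resolvent (sqrt_resolvent y + sqrt_compl_resolvent z)"
      by (simp add: pos_contraction_add[OF pos_contraction_sqrt_resolvent])
    finally have "x = resolvent (sqrt_resolvent y + sqrt_compl_resolvent z)"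
      using y sqrt_resolvent_sqrt_resolvent by metis
    then show "x \<in> range resolvent" by simp
  next
    fix x assume "x \<in> range resolvent"
    then obtain v where v: "x = resolvent v" by auto
    then have "x = sqrt_resolvent (sqrt_resolvent v)" by (simp add: sqrt_resolvent_sqrt_resolvent)
    moreover have "sqrt_TsT x = sqrt_resolvent (sqrt_compl_resolvent v)"
      by (simp add: \<open>x = sqrt_resolvent (sqrt_resolvent v)\<close> sqrt_TsT_sqrt_resolvent
          sqrt_compl_resolvent_sqrt_resolvent)
    ultimately show "x \<in> {x \<in> range sqrt_resolvent. sqrt_TsT x \<in> range sqrt_resolvent}" by simp
  qed
  then show ?thesis by (simp add: comp_dom_def sqrt_TsT_dom_def range_resolvent)
qed

lemma sqrt_TsT_sqrt_TsT: "x \<in> TsT_dom \<Longrightarrow> sqrt_TsT (sqrt_TsT x) = TsT x"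
proof -
  assume "x \<in> TsT_dom"
  then obtain v where v: "x = resolvent v" using range_resolvent by auto
  have "sqrt_TsT (sqrt_TsT x) = sqrt_compl_resolvent (sqrt_compl_resolvent v)"
    by (simp add: v flip: sqrt_resolvent_sqrt_resolvent
        add: sqrt_TsT_sqrt_resolvent sqrt_compl_resolvent_sqrt_resolvent)
  also have "\<dots> = TsT x"
    by (simp add: v sqrt_compl_resolvent_sqrt_compl_resolvent TsT_resolvent)
  finally show ?thesis .
qed

lemma is_sqrt_TsT_sqrt_TsT: "is_sqrt_TsT D T sqrt_TsT_dom sqrt_TsT"
  unfolding is_sqrt_TsT_def
  using self_adjoint_sqrt_TsT positive_op_sqrt_TsT comp_dom_sqrt_TsT sqrt_TsT_sqrt_TsT
  by (simp add: sqrt_TsT_def)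

end

section \<open>Uniqueness of \<open>|T|\<close>\<close>

lemma symmetric_nonneg_zero_if_Re_cinner_zero:
  fixes W :: "'a::complex_inner \<Rightarrow> 'a"
  assumes W: "linear W" and sym: "\<And>x y. cinner (W x) y = cinner x (W y)"
    and nonneg: "\<And>x. 0 \<le> Re (cinner (W x) x)" and zero: "Re (cinner (W y) y) = 0"
  shows "W y = 0"
proof -
  have "- Re (cinner (W y) w) = 0" for w
  proof (rule real_eq_0_if_linear_le_quadratic)
    show "0 \<le> Re (cinner (W w) w)" by (rule nonneg)
    fix t :: real
    have "0 \<le> Re (cinner (W (y + t *\<^sub>R w)) (y + t *\<^sub>R w))" by (rule nonneg)
    also have "\<dots> = Re (cinner (W y) y) + t * Re (cinner (W y) w) + t * Re (cinner (W w) y)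
        + t^2 * Re (cinner (W w) w)"
      by (simp add: linear_add[OF W] linear_scale[OF W] cinner_add_left cinner_add_right
          cinner_scaleR_left cinner_scaleR_right power2_eq_square algebra_simps)
    also have "Re (cinner (W w) y) = Re (cinner (W y) w)"
      by (simp add: sym Re_cinner_commute[of w])
    finally show "2 * t * (- Re (cinner (W y) w)) \<le> t^2 * Re (cinner (W w) w)"
      using zero by simp
  qed
  from this[of "W y"] have "(norm (W y))^2 = 0" by (simp add: power2_norm_eq_cinner)
  then show ?thesis by simp
qed

text \<open>Two commuting nonnegative symmetric operators with the same square coincide:
  with \<open>y = W x - W\<^sub>0 x\<close> one has \<open>(W + W\<^sub>0) y = 0\<close>, so \<open>W y = W\<^sub>0 y = 0\<close> and
  \<open>\<parallel>y\<parallel>\<^sup>2 = \<langle>x, W y - W\<^sub>0 y\<rangle> = 0\<close>.\<close>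

lemma commuting_nonneg_sqrt_unique:
  fixes W W0 :: "'a::complex_inner \<Rightarrow> 'a"
  assumes W: "linear W" "\<And>x y. cinner (W x) y = cinner x (W y)" "\<And>x. 0 \<le> Re (cinner (W x) x)"
    and W0: "linear W0" "\<And>x y. cinner (W0 x) y = cinner x (W0 y)" "\<And>x. 0 \<le> Re (cinner (W0 x) x)"
    and comm: "\<And>x. W (W0 x) = W0 (W x)" and sq: "\<And>x. W (W x) = W0 (W0 x)"
  shows "W x = W0 x"
proof -
  define y where "y = W x - W0 x"
  have "W y + W0 y = 0"
    unfolding y_def using sq[of x] comm[of x] by (simp add: linear_diff[OF W(1)] linear_diff[OF W0(1)])
  then have "Re (cinner (W y) y) + Re (cinner (W0 y) y) = 0"
    by (metis cinner_add_left cinner_zero_left plus_complex.sel(1) zero_complex.sel(1))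
  then have "Re (cinner (W y) y) = 0" "Re (cinner (W0 y) y) = 0"
    using W(3)[of y] W0(3)[of y] by linarith+
  then have "W y = 0" "W0 y = 0"
    using symmetric_nonneg_zero_if_Re_cinner_zero[OF W] symmetric_nonneg_zero_if_Re_cinner_zero[OF W0]
    by simp_all
  have "cinner y y = cinner (W x) y - cinner (W0 x) y" by (simp add: y_def cinner_diff_left)
  also have "\<dots> = cinner x (W y) - cinner x (W0 y)" by (simp only: W(2) W0(2))
  also have "\<dots> = 0" using \<open>W y = 0\<close> \<open>W0 y = 0\<close> by simp
  finally show ?thesis by (simp add: y_def)
qed

text \<open>Hypothesis \<open>key\<close> says that no nonzero point of the graph is orthogonal to
  \<open>{(F x, X (F x))}\<close>.\<close>

lemma graph_eq_closure_core:
  fixes DX :: "'a::chilbert set" and X :: "'a \<Rightarrow> 'b::chilbert" and F :: "'a \<Rightarrow> 'a"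
  assumes lin: "lin_op DX X" and cl: "closed (graph DX X)" and F: "lin_op UNIV F"
    and FD: "\<And>x. F x \<in> DX"
    and key: "\<And>z x. z \<in> DX \<Longrightarrow> cinner z (F x) + cinner (X z) (X (F x)) = cinner z x"
  shows "graph DX X = closure {(F x, X (F x)) | x. True}"
proof -
  define E where "E = {(F x, X (F x)) | x. True}"
  have "E = (\<lambda>x. (F x, X (F x))) ` UNIV" by (auto simp: E_def)
  moreover have "lin_op UNIV (\<lambda>x. (F x, X (F x)))"
    using F lin_op_add[OF lin FD FD] lin_op_scaleC[OF lin FD]
    by (simp add: lin_op_def csubspace_def scaleC_prod_def)
  ultimately have Esub: "csubspace E" by (simp add: csubspace_image)
  have "E \<subseteq> graph DX X" unfolding E_def graph_def using FD by blast
  then have cE: "closure E \<subseteq> graph DX X" using cl by (rule closure_minimal)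
  have "graph DX X \<subseteq> closure E"
  proof
    fix g assume "g \<in> graph DX X"
    then obtain y where y: "y \<in> DX" "g = (y, X y)" unfolding graph_def by blast
    obtain p where p: "p \<in> closure E" "g - p \<in> orthogonal_complement (closure E)"
      using orthogonal_projection_exists[OF csubspace_closure[OF Esub] closed_closure] by blast
    then obtain q where q: "q \<in> DX" "p = (q, X q)" using cE unfolding graph_def by blast
    have z: "y - q \<in> DX" using y q csubspace_diff[OF lin_op_csubspace[OF lin]] by simp
    have gp: "g - p = (y - q, X (y - q))" using y q lin_op_diff[OF lin] by simp
    have "cinner (y - q) x = 0" for x
    proof -
      have "(F x, X (F x)) \<in> E" unfolding E_def by blast
      then have "(F x, X (F x)) \<in> closure E" by (rule subsetD[OF closure_subset])
      from orthogonal_complementD[OF p(2) this]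
      have "cinner (y - q) (F x) + cinner (X (y - q)) (X (F x)) = 0" by (simp add: gp cinner_Pair)
      then show ?thesis using key[OF z] by simp
    qed
    then have "y - q = 0" by (rule cinner_all_zero_imp_zero)
    then show "g \<in> closure E" using p(1) y q by simp
  qed
  with cE show ?thesis unfolding E_def by (rule equalityI[rotated])
qed

text \<open>\<open>Y\<close> maps sequences in \<open>F(H)\<close> that approximate a point of the graph of \<open>X\<close>
  to Cauchy sequences.\<close>

lemma core_norm_eq_transfer:
  fixes DX :: "'a::chilbert set" and X :: "'a \<Rightarrow> 'b::chilbert" and Y :: "'a \<Rightarrow> 'c::chilbert"
    and F :: "'d::chilbert \<Rightarrow> 'a"
  assumes X: "lin_op DX X" and Y: "lin_op DY Y" and clY: "closed (graph DY Y)" and F: "lin_op UNIV F"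
    and FX: "\<And>x. F x \<in> DX" and FY: "\<And>x. F x \<in> DY"
    and core: "graph DX X \<subseteq> closure {(F x, X (F x)) | x. True}"
    and norm_eq: "\<And>x. norm (X (F x)) = norm (Y (F x))"
    and v: "v \<in> DX"
  shows "v \<in> DY" "norm (Y v) = norm (X v)"
proof -
  have "(v, X v) \<in> graph DX X" using v by (auto simp: graph_def)
  then have "(v, X v) \<in> closure {(F x, X (F x)) | x. True}" by (rule subsetD[OF core])
  then obtain p where p: "\<forall>n. p n \<in> {(F x, X (F x)) | x. True}" "p \<longlonglongrightarrow> (v, X v)"
    by (auto simp: closure_sequential)
  then have "\<forall>n. \<exists>x. p n = (F x, X (F x))" by blast
  then obtain xs where xs: "\<And>n. p n = (F (xs n), X (F (xs n)))" by metis
  define a where "a = (\<lambda>n. F (xs n))"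
  have "a = (\<lambda>n. fst (p n))" "(\<lambda>n. X (a n)) = (\<lambda>n. snd (p n))" by (simp_all add: xs a_def)
  then have av: "a \<longlonglongrightarrow> v" and aX: "(\<lambda>n. X (a n)) \<longlonglongrightarrow> X v"
    using tendsto_fst[OF p(2)] tendsto_snd[OF p(2)] by simp_all
  have dist_eq: "dist (Y (a m)) (Y (a n)) = dist (X (a m)) (X (a n))" for m n
  proof -
    have "F (xs m - xs n) = a m - a n" using lin_op_diff[OF F] by (simp add: a_def)
    then have "Y (a m) - Y (a n) = Y (F (xs m - xs n))" "X (a m) - X (a n) = X (F (xs m - xs n))"
      by (simp_all add: a_def lin_op_diff[OF Y FY FY] lin_op_diff[OF X FX FX])
    then show ?thesis by (simp add: dist_norm norm_eq)
  qed
  have "Cauchy (\<lambda>n. X (a n))" using aX by (rule LIMSEQ_imp_Cauchy)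
  then have "Cauchy (\<lambda>n. Y (a n))" unfolding Cauchy_def dist_eq .
  then obtain w where w: "(\<lambda>n. Y (a n)) \<longlonglongrightarrow> w" using convergent_eq_Cauchy by blast
  have aY: "a n \<in> DY" for n by (simp add: a_def FY)
  show "v \<in> DY" by (rule closed_graph_limit(1)[OF clY aY av w])
  have "Y v = w" by (rule closed_graph_limit(2)[OF clY aY av w])
  moreover have "(\<lambda>n. norm (Y (a n))) \<longlonglongrightarrow> norm w" using w by (rule tendsto_norm)
  moreover have "(\<lambda>n. norm (Y (a n))) \<longlonglongrightarrow> norm (X v)"
    using tendsto_norm[OF aX] by (simp add: a_def norm_eq)
  ultimately show "norm (Y v) = norm (X v)" using LIMSEQ_unique by blast
qed

context closed_densely_defined
begin

lemma lin_op_resolvent: "lin_op UNIV resolvent"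
  by (simp add: lin_op_def csubspace_def resolvent_add resolvent_scaleC)

lemma graph_T_eq_closure_resolvent: "graph D T = closure {(resolvent x, T (resolvent x)) | x. True}"
proof (rule graph_eq_closure_core[OF lin_op_T closed_graph_T lin_op_resolvent resolvent_in_D])
  fix z x assume "z \<in> D"
  then show "cinner z (resolvent x) + cinner (T z) (T (resolvent x)) = cinner z x"
    using cinner_TsT[OF resolvent_in_TsT_dom] resolvent_plus_TsT[of x] by (simp flip: cinner_add_right)
qed

end

locale sqrt_of_TsT = closed_densely_defined D T
  for D :: "'a::chilbert set" and T :: "'a \<Rightarrow> 'b::chilbert" +
  fixes DS :: "'a set" and S :: "'a \<Rightarrow> 'a"
  assumes is_sqrt: "is_sqrt_TsT D T DS S"

lemma (in closed_densely_defined) sqrt_of_TsTI: "is_sqrt_TsT D T DS S \<Longrightarrow> sqrt_of_TsT D T DS S"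
  by (simp add: sqrt_of_TsT_def sqrt_of_TsT_axioms_def closed_densely_defined_axioms)

context sqrt_of_TsT
begin

lemma self_adjoint_S: "self_adjoint DS S"
  using is_sqrt by (simp add: is_sqrt_TsT_def)

lemma lin_op_S: "lin_op DS S"
  using self_adjoint_S by (rule self_adjoint_lin_op)

lemma closed_graph_S: "closed (graph DS S)"
  using self_adjoint_S by (rule self_adjoint_closed_graph)

lemma S_cinner: "x \<in> DS \<Longrightarrow> y \<in> DS \<Longrightarrow> cinner (S x) y = cinner x (S y)"
  using self_adjoint_cinner[OF self_adjoint_S] .

lemma S_nonneg: "x \<in> DS \<Longrightarrow> 0 \<le> Re (cinner (S x) x)"
  using is_sqrt by (simp add: is_sqrt_TsT_def positive_op_def)

lemma S_outside: "x \<notin> DS \<Longrightarrow> S x = 0"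
  using is_sqrt by (simp add: is_sqrt_TsT_def)

lemma S_S_dom: "x \<in> DS \<and> S x \<in> DS \<longleftrightarrow> x \<in> TsT_dom"
  using is_sqrt by (auto simp: is_sqrt_TsT_def comp_dom_def)

lemma S_S: "x \<in> TsT_dom \<Longrightarrow> S (S x) = TsT x"
  using is_sqrt S_S_dom by (simp add: is_sqrt_TsT_def comp_dom_def)

lemma resolvent_in_DS: "resolvent x \<in> DS" and S_resolvent_in_DS: "S (resolvent x) \<in> DS"
  using S_S_dom resolvent_in_TsT_dom by blast+

lemma S_resolvent_commute:
  assumes x: "x \<in> DS"
  shows "S (resolvent x) = resolvent (S x)"
proof -
  define u where "u = resolvent x"
  have u: "u \<in> TsT_dom" "u \<in> DS" "S u \<in> DS"
    using resolvent_in_TsT_dom resolvent_in_DS S_resolvent_in_DS by (simp_all add: u_def)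
  have SSu: "S (S u) = x - u" using S_S[OF u(1)] TsT_resolvent by (simp add: u_def)
  have "x - u \<in> DS" using x u(2) csubspace_diff[OF lin_op_csubspace[OF lin_op_S]] by blast
  then have Su: "S u \<in> TsT_dom" using u(3) SSu by (intro S_S_dom[THEN iffD1] conjI) simp_all
  have "TsT (S u) = S x - S u"
    using S_S[OF Su] SSu lin_op_diff[OF lin_op_S x u(2)] by simp
  then have "S x = S u + TsT (S u)" by simp
  then have "resolvent (S x) = S u" using resolvent_I_plus_TsT[OF Su] by simp
  then show ?thesis by (simp add: u_def)
qed

lemma S_resolvent_square: "S (resolvent (S (resolvent x))) = resolvent x - resolvent (resolvent x)"
proof -
  have "S (resolvent (S (resolvent x))) = S (S (resolvent (resolvent x)))"
    using S_resolvent_commute[OF resolvent_in_DS, of x] by simp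
  also have "\<dots> = resolvent x - resolvent (resolvent x)"
    using S_S[OF resolvent_in_TsT_dom] TsT_resolvent by simp
  finally show ?thesis .
qed

lemma S_resolvent_cinner: "cinner (S (resolvent x)) y = cinner x (S (resolvent y))"
proof -
  have decomp: "v = resolvent v + S (S (resolvent v))" for v
    using resolvent_plus_TsT[of v] S_S[OF resolvent_in_TsT_dom] by simp
  have "cinner (S (resolvent x)) y
      = cinner (S (resolvent x)) (resolvent y) + cinner (S (resolvent x)) (S (S (resolvent y)))"
    by (subst decomp[of y]) (simp add: cinner_add_right)
  also have "\<dots> = cinner (resolvent x) (S (resolvent y)) + cinner (S (S (resolvent x))) (S (resolvent y))"
    using S_cinner[OF resolvent_in_DS resolvent_in_DS] S_cinner[OF S_resolvent_in_DS S_resolvent_in_DS]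
    by simp
  also have "\<dots> = cinner x (S (resolvent y))"
    by (subst (3) decomp[of x]) (simp add: cinner_add_left)
  finally show ?thesis .
qed

lemma S_resolvent_nonneg: "0 \<le> Re (cinner (S (resolvent x)) x)"
proof -
  have decomp: "x = resolvent x + S (S (resolvent x))"
    using resolvent_plus_TsT[of x] S_S[OF resolvent_in_TsT_dom] by simp
  have "cinner (S (resolvent x)) x
      = cinner (S (resolvent x)) (resolvent x) + cinner (S (resolvent x)) (S (S (resolvent x)))"
    by (subst (2) decomp) (simp add: cinner_add_right)
  then have "Re (cinner (S (resolvent x)) x)
      = Re (cinner (S (resolvent x)) (resolvent x)) + Re (cinner (S (S (resolvent x))) (S (resolvent x)))"
    by (simp add: Re_cinner_commute[of "S (resolvent x)" "S (S (resolvent x))"])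
  then show ?thesis using S_nonneg[OF resolvent_in_DS] S_nonneg[OF S_resolvent_in_DS] by simp
qed

lemma norm_S_resolvent_le: "norm (S (resolvent x)) \<le> norm x"
proof -
  have "(norm (S (resolvent x)))^2 = Re (cinner (x - resolvent x) (resolvent x))"
    using S_cinner[OF S_resolvent_in_DS resolvent_in_DS] S_S[OF resolvent_in_TsT_dom] TsT_resolvent
    by (simp add: power2_norm_eq_cinner)
  also have "\<dots> = Re (cinner x (resolvent x)) - (norm (resolvent x))^2"
    by (simp add: cinner_diff_left power2_norm_eq_cinner)
  also have "\<dots> \<le> norm x * norm (resolvent x)"
    using Re_cinner_le[of x "resolvent x"] zero_le_power2[of "norm (resolvent x)"] by linarith
  also have "\<dots> \<le> norm x * norm x"
    using pos_contraction_norm_le[OF pos_contraction_resolvent] by (simp add: mult_left_mono)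
  finally have "(norm (S (resolvent x)))^2 \<le> (norm x)^2" by (simp add: power2_eq_square)
  then show ?thesis by (rule power2_le_imp_le) simp
qed

lemma bounded_linear_S_resolvent: "bounded_linear (\<lambda>x. S (resolvent x))"
proof (rule bounded_linear_intro[of _ 1])
  fix x y :: 'a and r :: real
  show "S (resolvent (x + y)) = S (resolvent x) + S (resolvent y)"
    using lin_op_add[OF lin_op_S resolvent_in_DS resolvent_in_DS] by (simp add: resolvent_add)
  show "S (resolvent (r *\<^sub>R x)) = r *\<^sub>R S (resolvent x)"
    using lin_op_scaleC[OF lin_op_S resolvent_in_DS] by (simp add: scaleR_scaleC resolvent_scaleC)
  show "norm (S (resolvent x)) \<le> norm x * 1" using norm_S_resolvent_le by simp
qed

text \<open>\<open>S A\<close> is a nonnegative square root of \<open>A - A\<^sup>2\<close> commuting with \<open>A\<close>; so is \<open>C B\<close>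
  (\<open>B = A\<^sup>1\<^sup>/\<^sup>2\<close>, \<open>C = (I - A)\<^sup>1\<^sup>/\<^sup>2\<close>), and the two commute.\<close>

lemma S_resolvent_eq: "S (resolvent x) = sqrt_compl_resolvent (sqrt_resolvent x)"
proof -
  interpret S0: sqrt_of_TsT D T sqrt_TsT_dom sqrt_TsT
    by (rule sqrt_of_TsTI[OF is_sqrt_TsT_sqrt_TsT])
  have W0: "sqrt_TsT (resolvent v) = sqrt_compl_resolvent (sqrt_resolvent v)" for v
    using sqrt_TsT_sqrt_resolvent sqrt_resolvent_sqrt_resolvent by metis
  have W: "bounded_linear (\<lambda>x. S (resolvent x))" by (rule bounded_linear_S_resolvent)
  have WA: "S (resolvent (resolvent v)) = resolvent (S (resolvent v))" for v
    by (rule S_resolvent_commute[OF resolvent_in_DS])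
  show ?thesis
  proof (rule commuting_nonneg_sqrt_unique[where W = "\<lambda>x. S (resolvent x)"
        and W0 = "\<lambda>x. sqrt_compl_resolvent (sqrt_resolvent x)"])
    show "linear (\<lambda>x. S (resolvent x))" using W by (rule bounded_linear.linear)
    show "linear (\<lambda>x. sqrt_compl_resolvent (sqrt_resolvent x))"
      using S0.bounded_linear_S_resolvent by (simp add: W0 bounded_linear.linear)
    show "cinner (S (resolvent x)) y = cinner x (S (resolvent y))" for x y
      by (rule S_resolvent_cinner)
    show "cinner (sqrt_compl_resolvent (sqrt_resolvent x)) y = cinner x (sqrt_compl_resolvent (sqrt_resolvent y))" for x y
      using S0.S_resolvent_cinner by (simp add: W0)
    show "0 \<le> Re (cinner (S (resolvent x)) x)" for x by (rule S_resolvent_nonneg)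
    show "0 \<le> Re (cinner (sqrt_compl_resolvent (sqrt_resolvent x)) x)" for x
      using S0.S_resolvent_nonneg by (simp add: W0)
    show "S (resolvent (S (resolvent x))) = sqrt_compl_resolvent (sqrt_resolvent (sqrt_compl_resolvent (sqrt_resolvent x)))" for x
      using S_resolvent_square S0.S_resolvent_square by (simp add: W0)
    show "S (resolvent (sqrt_compl_resolvent (sqrt_resolvent x))) = sqrt_compl_resolvent (sqrt_resolvent (S (resolvent x)))" for x
      using sqrt_compl_resolvent_commute[OF W WA] sqrt_resolvent_commute[OF W WA] by simp
  qed
qed

lemma graph_S_eq_closure_resolvent: "graph DS S = closure {(resolvent x, S (resolvent x)) | x. True}"
proof (rule graph_eq_closure_core[OF lin_op_S closed_graph_S lin_op_resolvent resolvent_in_DS])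
  fix z x assume z: "z \<in> DS"
  have "cinner (S z) (S (resolvent x)) = cinner z (x - resolvent x)"
    using S_cinner[OF z S_resolvent_in_DS] S_S[OF resolvent_in_TsT_dom] TsT_resolvent by simp
  then show "cinner z (resolvent x) + cinner (S z) (S (resolvent x)) = cinner z x"
    by (simp add: cinner_diff_right)
qed

lemma graph_S_eq: "graph DS S = closure {(resolvent x, sqrt_compl_resolvent (sqrt_resolvent x)) | x. True}"
  using graph_S_eq_closure_resolvent by (simp add: S_resolvent_eq)

lemma norm_S_resolvent: "norm (S (resolvent x)) = norm (T (resolvent x))"
proof -
  have "(norm (S (resolvent x)))^2 = Re (cinner (S (S (resolvent x))) (resolvent x))"
    using S_cinner[OF S_resolvent_in_DS resolvent_in_DS] by (simp add: power2_norm_eq_cinner)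
  also have "\<dots> = Re (cinner (resolvent x) (TsT (resolvent x)))"
    using S_S[OF resolvent_in_TsT_dom] by (simp add: Re_cinner_commute[of "TsT (resolvent x)"])
  also have "\<dots> = (norm (T (resolvent x)))^2"
    using cinner_self_TsT[OF resolvent_in_TsT_dom] by simp
  finally show ?thesis by (simp add: power2_eq_iff_nonneg)
qed

lemma dom_S_eq: "DS = D"
proof
  show "DS \<subseteq> D"
    using core_norm_eq_transfer(1)[OF lin_op_S lin_op_T closed_graph_T lin_op_resolvent
        resolvent_in_DS resolvent_in_D equalityD1[OF graph_S_eq_closure_resolvent] norm_S_resolvent]
    by blast
  show "D \<subseteq> DS"
    using core_norm_eq_transfer(1)[OF lin_op_T lin_op_S closed_graph_S lin_op_resolvent
        resolvent_in_D resolvent_in_DS equalityD1[OF graph_T_eq_closure_resolvent] norm_S_resolvent[symmetric]]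
    by blast
qed

lemma norm_S_eq: "v \<in> D \<Longrightarrow> norm (S v) = norm (T v)"
  by (rule core_norm_eq_transfer(2)[OF lin_op_T lin_op_S closed_graph_S lin_op_resolvent
      resolvent_in_D resolvent_in_DS equalityD1[OF graph_T_eq_closure_resolvent] norm_S_resolvent[symmetric]])

end

context closed_densely_defined
begin

lemma sqrt_TsT_unique:
  assumes "is_sqrt_TsT D T DS1 S1" "is_sqrt_TsT D T DS2 S2"
  shows "DS1 = DS2" "S1 = S2"
proof -
  interpret S1: sqrt_of_TsT D T DS1 S1 by (rule sqrt_of_TsTI[OF assms(1)])
  interpret S2: sqrt_of_TsT D T DS2 S2 by (rule sqrt_of_TsTI[OF assms(2)])
  show "DS1 = DS2" using S1.dom_S_eq S2.dom_S_eq by simp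
  have "S1 x = S2 x" for x
  proof (cases "x \<in> DS1")
    case True
    then have "(x, S1 x) \<in> graph DS2 S2"
      using S1.graph_S_eq S2.graph_S_eq by (auto simp: graph_def)
    then show ?thesis by (auto simp: graph_def)
  next
    case False
    then show ?thesis using S1.S_outside S2.S_outside \<open>DS1 = DS2\<close> by simp
  qed
  then show "S1 = S2" by auto
qed

lemma is_sqrt_TsT_abs_op: "is_sqrt_TsT D T (abs_dom D T) (abs_op D T)"
proof -
  have "\<exists>!p. is_sqrt_TsT D T (fst p) (snd p)"
  proof (rule ex1I[of _ "(sqrt_TsT_dom, sqrt_TsT)"])
    fix p assume "is_sqrt_TsT D T (fst p) (snd p)"
    then show "p = (sqrt_TsT_dom, sqrt_TsT)"
      using sqrt_TsT_unique[OF _ is_sqrt_TsT_sqrt_TsT] by (metis prod.collapse)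
  qed (simp add: is_sqrt_TsT_sqrt_TsT)
  then have "is_sqrt_TsT D T (fst (abs_op_pair D T)) (snd (abs_op_pair D T))"
    unfolding abs_op_pair_def by (rule theI')
  then show ?thesis by (simp add: abs_dom_def abs_op_def)
qed

end

section \<open>Closed operators with closed range\<close>

lemma Baire_closed_cover:
  fixes R :: "'a::complete_space set"
  assumes R: "closed R" "R \<noteq> {}" and F: "\<And>n::nat. closed (F n)" "\<And>n. F n \<subseteq> R"
    and cover: "R \<subseteq> (\<Union>n. F n)"
  shows "\<exists>n. top_of_set R interior_of F n \<noteq> {}"
proof (rule ccontr)
  assume "\<not> ?thesis"
  then have empty: "\<And>n. top_of_set R interior_of F n = {}" by blast
  have "top_of_set R interior_of \<Union>(range F) = {}"
  proof (rule Baire_category_alt)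
    have "closedin euclidean R" using closed_closedin[THEN iffD1, OF R(1)] .
    then show "completely_metrizable_space (top_of_set R) \<or>
        locally_compact_space (top_of_set R) \<and> regular_space (top_of_set R)"
      by (intro disjI1 completely_metrizable_space_closedin[OF completely_metrizable_space_euclidean])
    show "countable (range F)" by simp
    fix G assume "G \<in> range F"
    then obtain n where n: "G = F n" by blast
    then show "closedin (top_of_set R) G \<and> top_of_set R interior_of G = {}"
      using closed_subset[OF F(2) F(1)] empty by simp
  qed
  moreover have "\<Union>(range F) = R" using cover F(2) by blast
  then have "top_of_set R interior_of \<Union>(range F) = R"
    using interior_of_topspace[of "top_of_set R"] by simp
  ultimately show False using R(2) by simp
qed

lemma closed_range_Baire:
  fixes V :: "'a::chilbert set" and T :: "'a \<Rightarrow> 'b::chilbert"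
  assumes T: "lin_op V T" and R: "closed (T ` V)"
  shows "\<exists>n y0 r. 0 < r \<and> y0 \<in> T ` V \<and>
    (\<forall>y\<in>T ` V. dist y y0 < r \<longrightarrow> y \<in> closure (T ` (V \<inter> cball 0 (real n))))"
proof -
  define F where "F n = closure (T ` (V \<inter> cball 0 (real n)))" for n :: nat
  have FR: "F n \<subseteq> T ` V" for n
    unfolding F_def using R by (intro closure_minimal) auto
  have cover: "T ` V \<subseteq> (\<Union>n. F n)"
  proof
    fix y assume "y \<in> T ` V"
    then obtain x where x: "x \<in> V" "y = T x" by blast
    obtain n :: nat where "norm x \<le> real n" using real_arch_simple by blast
    then have "y \<in> T ` (V \<inter> cball 0 (real n))" using x by auto
    then have "y \<in> F n" unfolding F_def by (rule subsetD[OF closure_subset])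
    then show "y \<in> (\<Union>n. F n)" by blast
  qed
  moreover have "T ` V \<noteq> {}" using csubspace_0[OF csubspace_image[OF T]] by blast
  ultimately have "\<exists>n. top_of_set (T ` V) interior_of F n \<noteq> {}"
    by (intro Baire_closed_cover[OF R _ _ FR]) (simp_all add: F_def)
  then obtain n y0 where "y0 \<in> top_of_set (T ` V) interior_of F n" by blast
  then obtain U where U: "openin (top_of_set (T ` V)) U" "y0 \<in> U" "U \<subseteq> F n"
    by (auto simp: interior_of_def)
  then obtain W where W: "open W" "U = T ` V \<inter> W" by (auto simp: openin_open)
  then obtain r where r: "r > 0" "ball y0 r \<subseteq> W" using U(2) open_contains_ball by blast
  have "y \<in> F n" if "y \<in> T ` V" "dist y y0 < r" for y
  proof -
    have "y \<in> ball y0 r" using that(2) by (simp add: dist_commute)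
    then show ?thesis using that(1) r(2) U(3) W(2) by blast
  qed
  moreover have "y0 \<in> T ` V" using U W by blast
  ultimately show ?thesis using r(1) unfolding F_def by blast
qed

lemma diff_mem_closure_image_cball:
  fixes V :: "'a::real_normed_vector set" and T :: "'a \<Rightarrow> 'b::real_normed_vector"
  assumes V: "\<And>u v. u \<in> V \<Longrightarrow> v \<in> V \<Longrightarrow> u - v \<in> V"
    and T: "\<And>u v. u \<in> V \<Longrightarrow> v \<in> V \<Longrightarrow> T (u - v) = T u - T v"
    and a: "a \<in> closure (T ` (V \<inter> cball 0 r))" and b: "b \<in> closure (T ` (V \<inter> cball 0 r))"
  shows "a - b \<in> closure (T ` (V \<inter> cball 0 (2 * r)))"
proof -
  let ?A = "T ` (V \<inter> cball 0 r)"
  have "(\<lambda>p. fst p - snd p) ` (?A \<times> ?A) \<subseteq> T ` (V \<inter> cball 0 (2 * r))"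
  proof (rule image_subsetI)
    fix p assume "p \<in> ?A \<times> ?A"
    then obtain u v where u: "u \<in> V" "norm u \<le> r" and v: "v \<in> V" "norm v \<le> r"
      and p: "p = (T u, T v)" by auto
    have "norm (u - v) \<le> norm u + norm v" by (rule norm_triangle_ineq4)
    then have "u - v \<in> V \<inter> cball 0 (2 * r)" using V[OF u(1) v(1)] u v by simp
    moreover have "fst p - snd p = T (u - v)" using T[OF u(1) v(1)] p by simp
    ultimately show "fst p - snd p \<in> T ` (V \<inter> cball 0 (2 * r))" by blast
  qed
  then have "(\<lambda>p. fst p - snd p) ` (?A \<times> ?A) \<subseteq> closure (T ` (V \<inter> cball 0 (2 * r)))"
    using closure_subset by (rule order_trans)
  then have "(\<lambda>p. fst p - snd p) ` closure (?A \<times> ?A) \<subseteq> closure (T ` (V \<inter> cball 0 (2 * r)))"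
    by (intro image_closure_subset continuous_intros) simp
  moreover have "(a, b) \<in> closure (?A \<times> ?A)" using a b by (simp add: closure_Times)
  ultimately have "fst (a, b) - snd (a, b) \<in> closure (T ` (V \<inter> cball 0 (2 * r)))" by blast
  then show ?thesis by simp
qed

lemma approx_preimage_if_small_in_closure:
  fixes V :: "'a::chilbert set" and T :: "'a \<Rightarrow> 'b::chilbert"
  assumes T: "lin_op V T" and r: "0 < r"
    and small: "\<And>y. y \<in> T ` V \<Longrightarrow> norm y < r \<Longrightarrow> y \<in> closure (T ` (V \<inter> cball 0 K))"
    and y: "y \<in> T ` V" and e: "e > 0"
  shows "\<exists>x\<in>V. norm x \<le> 2 * K / r * norm y \<and> norm (y - T x) < e"
proof (cases "y = 0")
  case True
  then show ?thesis using e csubspace_0[OF lin_op_csubspace[OF T]] lin_op_0[OF T] by (intro bexI[of _ 0]) auto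
next
  case False
  define t where "t = r / (2 * norm y)"
  have t: "t > 0" using False r by (simp add: t_def)
  have "scaleR t y \<in> T ` V" using csubspace_scaleR[OF csubspace_image[OF T] y] .
  moreover have "norm (scaleR t y) < r" using False r by (simp add: t_def)
  ultimately have "scaleR t y \<in> closure (T ` (V \<inter> cball 0 K))" by (rule small)
  then obtain z where "z \<in> T ` (V \<inter> cball 0 K)" "dist z (scaleR t y) < e * t"
    using e t unfolding closure_approachable by (meson mult_pos_pos)
  then obtain x' where x': "x' \<in> V" "norm x' \<le> K" "dist (T x') (scaleR t y) < e * t"
    by auto
  define x where "x = scaleR (1 / t) x'"
  have "x \<in> V" using csubspace_scaleR[OF lin_op_csubspace[OF T] x'(1)] by (simp add: x_def)
  moreover have "norm x \<le> 2 * K / r * norm y"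
    using x'(2) t False r by (simp add: x_def t_def field_simps)
  moreover have "norm (y - T x) < e"
  proof -
    have "y - T x = scaleR (1 / t) (scaleR t y - T x')"
      using t lin_op_scaleR[OF T x'(1)] by (simp add: x_def scaleR_diff_right)
    then have "norm (y - T x) = dist (T x') (scaleR t y) / t"
      using t by (simp add: dist_norm norm_minus_commute)
    also have "\<dots> < e" using x'(3) t by (simp add: divide_less_eq)
    finally show ?thesis .
  qed
  ultimately show ?thesis by blast
qed

lemma closed_range_approx_preimage:
  fixes V :: "'a::chilbert set" and T :: "'a \<Rightarrow> 'b::chilbert"
  assumes T: "lin_op V T" and R: "closed (T ` V)"
  shows "\<exists>M\<ge>0. \<forall>y\<in>T ` V. \<forall>e>0. \<exists>x\<in>V. norm x \<le> M * norm y \<and> norm (y - T x) < e"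
proof -
  obtain n y0 r where r: "0 < r" and y0: "y0 \<in> T ` V"
    and ball: "\<And>y. y \<in> T ` V \<Longrightarrow> dist y y0 < r \<Longrightarrow> y \<in> closure (T ` (V \<inter> cball 0 (real n)))"
    using closed_range_Baire[OF T R] by blast
  have "y \<in> closure (T ` (V \<inter> cball 0 (2 * real n)))" if "y \<in> T ` V" "norm y < r" for y
  proof -
    have "y0 + y \<in> T ` V" using csubspace_add[OF csubspace_image[OF T] y0 that(1)] .
    with that(2) have "y0 + y \<in> closure (T ` (V \<inter> cball 0 (real n)))"
      by (intro ball) (simp_all add: dist_norm)
    moreover have "y0 \<in> closure (T ` (V \<inter> cball 0 (real n)))" using ball[OF y0] r by simp
    ultimately show ?thesis
      using diff_mem_closure_image_cball[of V T] csubspace_diff[OF lin_op_csubspace[OF T]]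
        lin_op_diff[OF T] by fastforce
  qed
  then have "\<forall>y\<in>T ` V. \<forall>e>0. \<exists>x\<in>V. norm x \<le> 2 * (2 * real n) / r * norm y \<and> norm (y - T x) < e"
    using approx_preimage_if_small_in_closure[OF T r] by blast
  moreover have "2 * (2 * real n) / r \<ge> 0" using r by simp
  ultimately show ?thesis by blast
qed

text \<open>The iteration in the open mapping theorem: correct the residual \<open>y\<^sub>k\<close> by an approximate
  preimage of accuracy \<open>\<parallel>y\<parallel> / 2\<^sup>k\<^sup>+\<^sup>1\<close>.\<close>

lemma approx_preimage_series:
  fixes V :: "'a::chilbert set" and T :: "'a \<Rightarrow> 'b::chilbert"
  assumes T: "lin_op V T" and M: "M \<ge> 0"
    and approx: "\<And>y e. y \<in> T ` V \<Longrightarrow> e > 0 \<Longrightarrow> \<exists>x\<in>V. norm x \<le> M * norm y \<and> norm (y - T x) < e"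
    and y: "y \<in> T ` V"
  shows "\<exists>xs. (\<forall>k. xs k \<in> V \<and> norm (xs k) \<le> M * norm y * (1/2)^k)
    \<and> (\<forall>m. norm (y - T (\<Sum>k<m. xs k)) \<le> norm y * (1/2)^m)"
proof (cases "y = 0")
  case True
  then show ?thesis
    using csubspace_0[OF lin_op_csubspace[OF T]] lin_op_0[OF T] by (intro exI[of _ "\<lambda>_. 0"]) simp
next
  case False
  define d where "d = norm y"
  then have d: "d > 0" using False by simp
  obtain g where g: "\<And>y e. y \<in> T ` V \<Longrightarrow> e > 0 \<Longrightarrow>
      g y e \<in> V \<and> norm (g y e) \<le> M * norm y \<and> norm (y - T (g y e)) < e"
    using approx by metis
  define ys where "ys = rec_nat y (\<lambda>k v. v - T (g v (d / 2^Suc k)))"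
  define xs where "xs k = g (ys k) (d / 2^Suc k)" for k
  have ys_Suc: "ys (Suc k) = ys k - T (xs k)" for k by (simp add: ys_def xs_def)
  have ys: "ys k \<in> T ` V \<and> norm (ys k) \<le> d / 2^k" for k
  proof (induction k)
    case (Suc k)
    then have "xs k \<in> V" "norm (ys k - T (xs k)) < d / 2^Suc k"
      using g[of "ys k" "d / 2^Suc k"] d by (auto simp: xs_def)
    then show ?case
      using Suc csubspace_diff[OF csubspace_image[OF T]] by (simp add: ys_Suc)
  qed (simp add: ys_def d_def y)
  have xs: "xs k \<in> V \<and> norm (xs k) \<le> M * d * (1/2)^k" for k
  proof -
    have "xs k \<in> V" "norm (xs k) \<le> M * norm (ys k)"
      using g[of "ys k" "d / 2^Suc k"] ys d by (auto simp: xs_def)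
    moreover have "M * norm (ys k) \<le> M * (d / 2^k)" using ys M by (intro mult_left_mono) auto
    ultimately show ?thesis by (simp add: power_divide)
  qed
  have xsV: "xs k \<in> V" for k using xs by blast
  have sumV: "(\<Sum>k<m. xs k) \<in> V" for m by (rule csubspace_sum[OF lin_op_csubspace[OF T] xsV])
  have "T (\<Sum>k<m. xs k) = y - ys m" for m
  proof (induction m)
    case (Suc m)
    then show ?case
      using lin_op_add[OF T sumV xsV] by (simp add: ys_Suc)
  qed (simp add: lin_op_0[OF T] ys_def)
  then have "norm (y - T (\<Sum>k<m. xs k)) \<le> d * (1/2)^m" for m
    using ys by (simp add: power_divide)
  with xs show ?thesis unfolding d_def by blast
qed

lemma approx_preimage_imp_preimage:
  fixes V :: "'a::chilbert set" and T :: "'a \<Rightarrow> 'b::chilbert"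
  assumes T: "lin_op V T" and cl: "closed (graph V T)" and M: "M \<ge> 0"
    and approx: "\<And>y e. y \<in> T ` V \<Longrightarrow> e > 0 \<Longrightarrow> \<exists>x\<in>V. norm x \<le> M * norm y \<and> norm (y - T x) < e"
    and y: "y \<in> T ` V"
  shows "\<exists>x\<in>V. T x = y \<and> norm x \<le> 2 * M * norm y"
proof -
  obtain xs where xs: "\<And>k. xs k \<in> V" "\<And>k. norm (xs k) \<le> M * norm y * (1/2)^k"
    and residual: "\<And>m. norm (y - T (\<Sum>k<m. xs k)) \<le> norm y * (1/2)^m"
    using approx_preimage_series[OF T M approx y] by blast
  have geom: "summable (\<lambda>k. M * norm y * (1/2::real)^k)"
    by (intro summable_mult summable_geometric) simp
  have norm_xs: "summable (\<lambda>k. norm (xs k))"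
    by (rule summable_comparison_test'[OF geom]) (simp add: xs)
  define x where "x = suminf xs"
  have partial: "(\<lambda>m. \<Sum>k<m. xs k) \<longlonglongrightarrow> x"
    unfolding x_def by (rule summable_LIMSEQ[OF summable_norm_cancel[OF norm_xs]])
  have partial_V: "(\<Sum>k<m. xs k) \<in> V" for m by (rule csubspace_sum[OF lin_op_csubspace[OF T] xs(1)])
  have res0: "(\<lambda>m. y - T (\<Sum>k<m. xs k)) \<longlonglongrightarrow> 0"
  proof (rule Lim_null_comparison)
    show "\<forall>\<^sub>F m in sequentially. norm (y - T (\<Sum>k<m. xs k)) \<le> norm y * (1/2)^m"
      using residual by (intro always_eventually allI)
    show "(\<lambda>m. norm y * (1/2::real)^m) \<longlonglongrightarrow> 0"
      by (intro tendsto_mult_right_zero LIMSEQ_power_zero) simp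
  qed
  then have "(\<lambda>m. T (\<Sum>k<m. xs k)) \<longlonglongrightarrow> y"
    using tendsto_diff[OF tendsto_const res0, of y] by simp
  then have "x \<in> V" "T x = y" using closed_graph_limit[OF cl partial_V partial] by auto
  moreover have "norm x \<le> 2 * M * norm y"
  proof -
    have "norm x \<le> (\<Sum>k. norm (xs k))" unfolding x_def by (rule summable_norm[OF norm_xs])
    also have "\<dots> \<le> (\<Sum>k. M * norm y * (1/2::real)^k)" by (rule suminf_le[OF xs(2) norm_xs geom])
    also have "\<dots> = 2 * M * norm y" using suminf_geometric[of "1/2::real"] by (simp add: suminf_mult)
    finally show ?thesis .
  qed
  ultimately show ?thesis by blast
qed

lemma closed_range_bounded_preimage:
  fixes V :: "'a::chilbert set" and T :: "'a \<Rightarrow> 'b::chilbert"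
  assumes T: "lin_op V T" and cl: "closed (graph V T)" and R: "closed (T ` V)"
  shows "\<exists>c>0. \<forall>y\<in>T ` V. \<exists>x\<in>V. T x = y \<and> norm x \<le> c * norm y"
proof -
  obtain M where M: "M \<ge> 0"
    and approx: "\<forall>y\<in>T ` V. \<forall>e>0. \<exists>x\<in>V. norm x \<le> M * norm y \<and> norm (y - T x) < e"
    using closed_range_approx_preimage[OF T R] by blast
  have "\<exists>x\<in>V. T x = y \<and> norm x \<le> (2 * M + 1) * norm y" if y: "y \<in> T ` V" for y
  proof -
    obtain x where "x \<in> V" "T x = y" "norm x \<le> 2 * M * norm y"
      using approx_preimage_imp_preimage[OF T cl M _ y] approx by blast
    moreover have "2 * M * norm y \<le> (2 * M + 1) * norm y" by (simp add: distrib_right)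
    ultimately show ?thesis by force
  qed
  moreover have "2 * M + 1 > 0" using M by simp
  ultimately show ?thesis by blast
qed

lemma lin_op_subspace:
  assumes "lin_op D T" "csubspace V" "V \<subseteq> D"
  shows "lin_op V T"
  using assms by (auto simp: lin_op_def subset_eq)

lemma ex_preimage_orthogonal_kernel:
  fixes D :: "'a::chilbert set" and T :: "'a \<Rightarrow> 'b::chilbert"
  assumes T: "lin_op D T" and cl: "closed (graph D T)" and x: "x \<in> D"
  shows "\<exists>x'\<in>D \<inter> orthogonal_complement (op_kernel D T). T x' = T x"
proof -
  obtain p where p: "p \<in> op_kernel D T" "x - p \<in> orthogonal_complement (op_kernel D T)"
    using orthogonal_projection_exists[OF csubspace_op_kernel[OF T] closed_op_kernel[OF cl]] by blast
  then have "x - p \<in> D" "T (x - p) = T x"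
    using x csubspace_diff[OF lin_op_csubspace[OF T]] lin_op_diff[OF T] by (auto simp: op_kernel_def)
  with p(2) show ?thesis by blast
qed

lemma closed_range_bounded_below:
  fixes D :: "'a::chilbert set" and T :: "'a \<Rightarrow> 'b::chilbert"
  assumes T: "lin_op D T" and cl: "closed (graph D T)" and R: "closed (T ` D)"
  shows "\<exists>c>0. \<forall>x\<in>D \<inter> orthogonal_complement (op_kernel D T). norm x \<le> c * norm (T x)"
proof -
  define V where "V = D \<inter> orthogonal_complement (op_kernel D T)"
  have V: "lin_op V T"
    unfolding V_def
    by (rule lin_op_subspace[OF T])
      (auto simp: csubspace_def csubspace_orthogonal_complement[unfolded csubspace_def]
        lin_op_csubspace[OF T, unfolded csubspace_def])
  have "graph V T = graph D T \<inter> (orthogonal_complement (op_kernel D T) \<times> UNIV)"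
    by (auto simp: V_def graph_def)
  then have clV: "closed (graph V T)"
    by (simp add: closed_Int closed_Times cl closed_orthogonal_complement)
  have "T ` V = T ` D"
  proof
    show "T ` V \<subseteq> T ` D" by (auto simp: V_def)
    show "T ` D \<subseteq> T ` V"
    proof
      fix y assume "y \<in> T ` D"
      then obtain x where "x \<in> D" "y = T x" by blast
      with ex_preimage_orthogonal_kernel[OF T cl this(1)] show "y \<in> T ` V"
        unfolding V_def by (metis image_eqI)
    qed
  qed
  with R have "closed (T ` V)" by simp
  then obtain c where c: "c > 0" and pre: "\<And>y. y \<in> T ` V \<Longrightarrow> \<exists>x\<in>V. T x = y \<and> norm x \<le> c * norm y"
    using closed_range_bounded_preimage[OF V clV] by blast
  have "norm x \<le> c * norm (T x)" if x: "x \<in> V" for x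
  proof -
    obtain x' where x': "x' \<in> V" "T x' = T x" "norm x' \<le> c * norm (T x)"
      using pre[of "T x"] x by blast
    have "x - x' \<in> op_kernel D T"
      using x x' lin_op_diff[OF V] csubspace_diff[OF lin_op_csubspace[OF T]]
      by (auto simp: op_kernel_def V_def)
    moreover have "x - x' \<in> orthogonal_complement (op_kernel D T)"
      using x x' csubspace_diff[OF csubspace_orthogonal_complement] by (auto simp: V_def)
    ultimately have "x = x'" using orthogonal_complement_Int by fastforce
    then show ?thesis using x' by simp
  qed
  with c show ?thesis by (auto simp: V_def)
qed

lemma Cauchy_if_dist_le:
  assumes "Cauchy v" and c: "c > 0" and le: "\<And>i j. dist (w i) (w j) \<le> c * dist (v i) (v j)"
  shows "Cauchy w"
proof (rule metric_CauchyI)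
  fix e :: real assume "e > 0"
  then obtain N where N: "\<forall>i\<ge>N. \<forall>j\<ge>N. dist (v i) (v j) < e / c"
    using \<open>Cauchy v\<close> c unfolding Cauchy_def by (meson divide_pos_pos)
  have "dist (w i) (w j) < e" if "i \<ge> N" "j \<ge> N" for i j
  proof -
    have "dist (w i) (w j) \<le> c * dist (v i) (v j)" by (rule le)
    also have "\<dots> < c * (e / c)" using N that c by (intro mult_strict_left_mono) auto
    finally show ?thesis using c by simp
  qed
  then show "\<exists>N. \<forall>i\<ge>N. \<forall>j\<ge>N. dist (w i) (w j) < e" by blast
qed

lemma bounded_below_imp_closed_range:
  fixes D :: "'a::chilbert set" and S :: "'a \<Rightarrow> 'b::chilbert"
  assumes S: "lin_op D S" and cl: "closed (graph D S)" and c: "c > 0"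
    and below: "\<And>x. x \<in> D \<inter> orthogonal_complement (op_kernel D S) \<Longrightarrow> norm x \<le> c * norm (S x)"
  shows "closed (S ` D)"
  unfolding closed_sequential_limits
proof (intro allI impI)
  fix v l assume h: "(\<forall>k. v k \<in> S ` D) \<and> v \<longlonglongrightarrow> l"
  have "\<exists>w\<in>D \<inter> orthogonal_complement (op_kernel D S). S w = v k" for k
  proof -
    obtain u where "u \<in> D" "v k = S u" using h by blast
    then show ?thesis using ex_preimage_orthogonal_kernel[OF S cl] by simp
  qed
  then obtain w where w: "\<And>k. w k \<in> D \<inter> orthogonal_complement (op_kernel D S)" "\<And>k. S (w k) = v k"
    by metis
  have "dist (w i) (w j) \<le> c * dist (v i) (v j)" for i j
  proof -
    have "w i - w j \<in> D \<inter> orthogonal_complement (op_kernel D S)"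
      using w(1)[of i] w(1)[of j] csubspace_diff[OF lin_op_csubspace[OF S]]
        csubspace_diff[OF csubspace_orthogonal_complement] by blast
    then have "norm (w i - w j) \<le> c * norm (S (w i - w j))" by (rule below)
    then show ?thesis using w lin_op_diff[OF S] by (simp add: dist_norm)
  qed
  moreover have "Cauchy v" using h LIMSEQ_imp_Cauchy by blast
  ultimately have "Cauchy w" using c by (intro Cauchy_if_dist_le[of v c w])
  then obtain wl where wl: "w \<longlonglongrightarrow> wl" using convergent_eq_Cauchy by blast
  have wD: "w k \<in> D" for k using w(1) by blast
  have "(\<lambda>k. S (w k)) \<longlonglongrightarrow> l" using h w(2) by simp
  then have "wl \<in> D" "S wl = l" using closed_graph_limit[OF cl wD wl] by simp_all
  then show "l \<in> S ` D" by blast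
qed

lemma self_adjoint_range_eq_orthogonal_kernel:
  fixes D :: "'a::chilbert set"
  assumes S: "self_adjoint D S" and R: "closed (S ` D)"
  shows "S ` D = orthogonal_complement (op_kernel D S)"
proof
  have perp: "S x \<in> orthogonal_complement (op_kernel D S)" if "x \<in> D" for x
    using self_adjoint_cinner[OF S that] by (auto intro!: orthogonal_complementI simp: op_kernel_def)
  then show "S ` D \<subseteq> orthogonal_complement (op_kernel D S)" by blast
  show "orthogonal_complement (op_kernel D S) \<subseteq> S ` D"
  proof
    fix z assume z: "z \<in> orthogonal_complement (op_kernel D S)"
    obtain p where p: "p \<in> S ` D" "z - p \<in> orthogonal_complement (S ` D)"
      using orthogonal_projection_exists[OF csubspace_image[OF self_adjoint_lin_op[OF S]] R] by blast
    have "cinner (S w) (z - p) = cinner w 0" if "w \<in> D" for w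
      using orthogonal_complementD[OF p(2), of "S w"] that cinner_commute[of "S w" "z - p"] by simp
    then have "z - p \<in> adj_dom D S" "adj D S (z - p) = 0"
      using adj_eqI[OF self_adjoint_dense[OF S]] by blast+
    then have "z - p \<in> op_kernel D S" using S by (auto simp: self_adjoint_def op_kernel_def)
    moreover have "z - p \<in> orthogonal_complement (op_kernel D S)"
      using z p(1) perp csubspace_diff[OF csubspace_orthogonal_complement] by blast
    ultimately have "z - p = 0" by (rule orthogonal_complement_Int)
    then show "z \<in> S ` D" using p(1) by simp
  qed
qed

lemma closed_graph_comp_bounded_below:
  fixes DA :: "'b::chilbert set" and A :: "'b \<Rightarrow> 'c::chilbert"
    and DB :: "'a::chilbert set" and B :: "'a \<Rightarrow> 'b"
  assumes A: "lin_op DA A" "closed (graph DA A)" and B: "closed (graph DB B)"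
    and Z: "csubspace Z" and BZ: "\<And>x. x \<in> DB \<Longrightarrow> B x \<in> Z" and c: "c > 0"
    and below: "\<And>z. z \<in> DA \<inter> Z \<Longrightarrow> norm z \<le> c * norm (A z)"
  shows "closed (graph (comp_dom DA A DB B) (A \<circ> B))"
  unfolding closed_sequential_limits
proof (intro allI impI)
  fix p l assume h: "(\<forall>k. p k \<in> graph (comp_dom DA A DB B) (A \<circ> B)) \<and> p \<longlonglongrightarrow> l"
  then have "\<forall>k. \<exists>x. p k = (x, A (B x)) \<and> x \<in> DB \<and> B x \<in> DA"
    by (auto simp: graph_def comp_dom_def)
  then obtain x where x: "\<And>k. p k = (x k, A (B (x k)))" "\<And>k. x k \<in> DB" "\<And>k. B (x k) \<in> DA"
    by metis
  have "(\<lambda>k. fst (p k)) \<longlonglongrightarrow> fst l" "(\<lambda>k. snd (p k)) \<longlonglongrightarrow> snd l"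
    using h by (auto intro: tendsto_fst tendsto_snd)
  then have xl: "x \<longlonglongrightarrow> fst l" and ABl: "(\<lambda>k. A (B (x k))) \<longlonglongrightarrow> snd l"
    by (simp_all add: x(1))
  have "dist (B (x i)) (B (x j)) \<le> c * dist (A (B (x i))) (A (B (x j)))" for i j
  proof -
    have "B (x i) - B (x j) \<in> DA \<inter> Z"
      using x BZ csubspace_diff[OF lin_op_csubspace[OF A(1)]] csubspace_diff[OF Z] by blast
    then have "norm (B (x i) - B (x j)) \<le> c * norm (A (B (x i) - B (x j)))" by (rule below)
    then show ?thesis by (simp add: dist_norm lin_op_diff[OF A(1) x(3) x(3)])
  qed
  then have "Cauchy (\<lambda>k. B (x k))" using LIMSEQ_imp_Cauchy[OF ABl] c by (rule Cauchy_if_dist_le[rotated 2])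
  then obtain s where s: "(\<lambda>k. B (x k)) \<longlonglongrightarrow> s" using convergent_eq_Cauchy by blast
  have "fst l \<in> DB" "B (fst l) = s" using closed_graph_limit[OF B x(2) xl s] by blast+
  moreover have "s \<in> DA" "A s = snd l" using closed_graph_limit[OF A(2) x(3) s ABl] by blast+
  ultimately show "l \<in> graph (comp_dom DA A DB B) (A \<circ> B)"
    by (auto simp: graph_def comp_dom_def intro!: exI[of _ "fst l"])
qed

lemma closed_op_comp_norm_eq_self_adjoint:
  fixes D :: "'a::chilbert set" and T :: "'a \<Rightarrow> 'b::chilbert" and S :: "'a \<Rightarrow> 'a"
  assumes T: "closed_op D T" and R: "closed (T ` D)" and S: "self_adjoint D S"
    and norm_eq: "\<And>v. v \<in> D \<Longrightarrow> norm (S v) = norm (T v)"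
  shows "closed_op (comp_dom D T D S) (T \<circ> S) \<and> (T \<circ> S) ` comp_dom D T D S = T ` D"
proof -
  have linT: "lin_op D T" and clT: "closed (graph D T)" using T by (simp_all add: closed_op_def)
  have linS: "lin_op D S" and clS: "closed (graph D S)"
    using S by (simp_all add: self_adjoint_lin_op self_adjoint_closed_graph)
  define N where "N = orthogonal_complement (op_kernel D T)"
  have "S x = 0 \<longleftrightarrow> T x = 0" if "x \<in> D" for x
    using norm_eq[OF that] by (metis norm_eq_zero)
  then have "op_kernel D S = op_kernel D T" by (auto simp: op_kernel_def)
  then have ker: "orthogonal_complement (op_kernel D S) = N" by (simp add: N_def)
  obtain c where c: "c > 0" and below: "\<And>x. x \<in> D \<inter> N \<Longrightarrow> norm x \<le> c * norm (T x)"
    using closed_range_bounded_below[OF linT clT R] unfolding N_def by blast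
  have "closed (S ` D)"
    using bounded_below_imp_closed_range[OF linS clS c] below norm_eq ker by simp
  then have SN: "S ` D = N"
    using self_adjoint_range_eq_orthogonal_kernel[OF S] ker by simp
  have "closed (graph (comp_dom D T D S) (T \<circ> S))"
    using SN by (intro closed_graph_comp_bounded_below[OF linT clT clS _ _ c below])
      (auto simp: N_def csubspace_orthogonal_complement)
  moreover have "T ` D \<subseteq> (T \<circ> S) ` comp_dom D T D S"
  proof
    fix y assume "y \<in> T ` D"
    then obtain x where "x \<in> D" "y = T x" by blast
    then obtain x' where x': "x' \<in> D \<inter> N" "T x' = y"
      using ex_preimage_orthogonal_kernel[OF linT clT] unfolding N_def by blast
    then obtain w where "w \<in> D" "x' = S w" using SN by blast
    with x' show "y \<in> (T \<circ> S) ` comp_dom D T D S" by (auto simp: comp_dom_def)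
  qed
  ultimately show ?thesis
    using lin_op_comp[OF linT linS] by (auto simp: closed_op_def comp_dom_def)
qed

theorem lemma2p11:
  fixes D :: "'a::chilbert set" and T :: "'a \<Rightarrow> 'b::chilbert"
  assumes "densely_defined D T"
    and "closed_op D T"
    and "closed (T ` D)"
  shows "closed_op (comp_dom D T (abs_dom D T) (abs_op D T)) (T \<circ> abs_op D T)
    \<and> (T \<circ> abs_op D T) ` comp_dom D T (abs_dom D T) (abs_op D T) = T ` D"
proof -
  interpret closed_densely_defined D T using assms(1,2) by unfold_locales
  interpret abs: sqrt_of_TsT D T "abs_dom D T" "abs_op D T"
    by (rule sqrt_of_TsTI[OF is_sqrt_TsT_abs_op])
  show ?thesis
    using closed_op_comp_norm_eq_self_adjoint[OF assms(2,3)] abs.self_adjoint_S abs.norm_S_eq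
    unfolding abs.dom_S_eq by blast
qed

end
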